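(* Let $A\in\mathcal R$ and $F\in\mathcal S(A)$. Then (1) if $x\notin\mathcal A(A)$ then $I_F(x)>0$; (2) if $x\notin\mathcal A(A)$ and $T(x)\in\mathcal A(A)$ then $R_F(x)>0$.
   Context: $\Sigma=\{1,\dots,d\}^{\mathbb N}$, $T$ the left shift, metric $d(\omega,\nu)=\lambda^N$, $N=\min\{k:\omega_k\ne\nu_k\}$, $0<\lambda<1$. $m_A=\max\{\int A\,d\mu:\mu\ T\text{-invariant}\}$; $\mathcal M(A)$ the set of invariant probabilities attaining $m_A$. $\mathcal S(A)$ is the set of $\alpha$-Hölder calibrated sub-actions $F$, i.e. $F(x)=\max_{Ty=x}[F(y)+A(y)-m_A]$. $R_F(x)=F(Tx)-F(x)-A(x)+m_A\ge0$, $I_F(x)=\sum_{i\ge0}R_F(T^ix)$. $S_A(x,y)=\lim_{\epsilon\to0}\sup\{\sum_{i=0}^{n-1}[A(T^iz)-m_A]:n\in\mathbb N,\ T^nz=y,\ d(z,x)<\epsilon\}$; $\mathcal A(A)=\{x:S_A(x,x)=0\}$. $\mathcal R=\{A\in C^\alpha(\Sigma,\mathbb R):\mathcal M(A)=\{\mu\},\ \mathcal A(A)=\operatorname{supp}\mu\}$. *)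

theory Defs
  imports "HOL-Probability.Probability"
begin

text \<open>Points of Sigma = {1..d}^N are sequences nat => 'a with a finite alphabet 'a
  (d = CARD('a)); coordinate 0 is the first symbol.\<close>

type_synonym 'a seq = "nat \<Rightarrow> 'a"

definition shift :: "'a seq \<Rightarrow> 'a seq" where
  "shift x = (\<lambda>n. x (Suc n))"

definition first_diff :: "'a seq \<Rightarrow> 'a seq \<Rightarrow> nat" where
  "first_diff x y = (LEAST k. x k \<noteq> y k)"

definition sdist :: "real \<Rightarrow> 'a seq \<Rightarrow> 'a seq \<Rightarrow> real" where
  "sdist lam x y = (if x = y then 0 else lam ^ first_diff x y)"

definition holder :: "real \<Rightarrow> real \<Rightarrow> ('a seq \<Rightarrow> real) \<Rightarrow> bool" where
  "holder lam \<alpha> f \<longleftrightarrow> (\<exists>C. \<forall>x y. \<bar>f x - f y\<bar> \<le> C * (sdist lam x y) powr \<alpha>)"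

text \<open>The measurable space on Sigma: product sigma algebra (= Borel sigma algebra).\<close>
definition SM :: "'a seq measure" where
  "SM = PiM UNIV (\<lambda>_. count_space UNIV)"

definition invariant_prob :: "'a seq measure \<Rightarrow> bool" where
  "invariant_prob \<mu> \<longleftrightarrow> prob_space \<mu> \<and> sets \<mu> = sets SM \<and> distr \<mu> SM shift = \<mu>"

definition mA :: "('a seq \<Rightarrow> real) \<Rightarrow> real" where
  "mA A = (SUP \<mu>\<in>{\<mu>. invariant_prob \<mu>}. integral\<^sup>L \<mu> A)"

definition maximizing :: "('a seq \<Rightarrow> real) \<Rightarrow> 'a seq measure set" where
  "maximizing A = {\<mu>. invariant_prob \<mu> \<and> integral\<^sup>L \<mu> A = mA A}"

definition calibrated :: "real \<Rightarrow> real \<Rightarrow> ('a::finite seq \<Rightarrow> real) \<Rightarrow> ('a seq \<Rightarrow> real) set" where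
  "calibrated lam \<alpha> A = {F. holder lam \<alpha> F \<and>
      (\<forall>x. F x = Max {F y + A y - mA A | y. shift y = x})}"

definition RF :: "('a seq \<Rightarrow> real) \<Rightarrow> ('a seq \<Rightarrow> real) \<Rightarrow> 'a seq \<Rightarrow> real" where
  "RF A F x = F (shift x) - F x - A x + mA A"

definition IF :: "('a seq \<Rightarrow> real) \<Rightarrow> ('a seq \<Rightarrow> real) \<Rightarrow> 'a seq \<Rightarrow> ereal" where
  "IF A F x = (\<Sum>i. ereal (RF A F ((shift ^^ i) x)))"

definition SA :: "real \<Rightarrow> ('a seq \<Rightarrow> real) \<Rightarrow> 'a seq \<Rightarrow> 'a seq \<Rightarrow> ereal" where
  "SA lam A x y = Lim (at_right (0::real))
     (\<lambda>\<epsilon>. Sup {ereal (\<Sum>i<n. A ((shift ^^ i) z) - mA A) | n z.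
                 n \<ge> 1 \<and> (shift ^^ n) z = y \<and> sdist lam z x < \<epsilon>})"

definition aubry :: "real \<Rightarrow> ('a seq \<Rightarrow> real) \<Rightarrow> 'a seq set" where
  "aubry lam A = {x. SA lam A x x = 0}"

definition msupp :: "real \<Rightarrow> 'a seq measure \<Rightarrow> 'a seq set" where
  "msupp lam \<mu> = {x. \<forall>\<epsilon>>0. measure \<mu> {z. sdist lam z x < \<epsilon>} > 0}"

definition classR :: "real \<Rightarrow> real \<Rightarrow> ('a::finite seq \<Rightarrow> real) set" where
  "classR lam \<alpha> = {A. holder lam \<alpha> A \<and>
      (\<exists>\<mu>. maximizing A = {\<mu>} \<and> aubry lam A = msupp lam \<mu>)}"

end

theory Submission
  imports Defs "HOL-Library.Diagonal_Subsequence"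
begin

(*
  The defect R = R_F is nonnegative, so
  I_F(x) = sum_i R(T^i x) vanishes exactly when R vanishes along the forward orbit of x.
  Part (1) therefore reduces to: if R vanishes along the forward orbit of x, then x lies in the
  Aubry set.  Any limit of empirical measures along an orbit on which R vanishes is an
  invariant measure giving R integral 0, hence maximizing, hence equal to mu.  This applies to
  the forward orbit of x and to a backward orbit of x built from calibrating preimages (R = 0
  along it), so both orbits come arbitrarily close to a common point of supp mu.  Gluing a
  long forward piece with a backward piece gives points z near x with T^n z = x whose Birkhoff
  sums of A - m_A are almost nonnegative; the sub-action bounds them from above by a Hoelder
  term, so S_A(x,x) = 0.  For (2), supp mu is forward invariant and R vanishes on it, so if
  T x is in supp mu and R(x) = 0 then R vanishes along the orbit of x, and x is in the Aubry set.
*)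

section \<open>Cylinders and Hoelder functions\<close>

definition cyl :: "'a list \<Rightarrow> 'a seq set" where
  "cyl w = {z. \<forall>i<length w. z i = w ! i}"

definition pref :: "nat \<Rightarrow> 'a seq \<Rightarrow> 'a list" where
  "pref N z = map z [0..<N]"

lemma length_pref[simp]: "length (pref N z) = N"
  by (simp add: pref_def)

lemma pref_nth[simp]: "i < N \<Longrightarrow> pref N z ! i = z i"
  by (simp add: pref_def)

lemma in_cyl_pref: "z \<in> cyl (pref N y) \<longleftrightarrow> (\<forall>i<N. z i = y i)"
  by (simp add: cyl_def)

lemma cyl_iff: "z \<in> cyl w \<longleftrightarrow> pref (length w) z = w"
  by (auto simp: cyl_def intro: nth_equalityI) (metis pref_nth)

lemma funpow_shift: "(shift ^^ n) z = (\<lambda>i. z (i + n))"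
  by (induction n arbitrary: z) (auto simp: shift_def)

lemma cyl_Cons: "z \<in> cyl (b # w) \<longleftrightarrow> z 0 = b \<and> shift z \<in> cyl w"
  unfolding cyl_def shift_def by (auto simp: less_Suc_eq_0_disj)

lemma cyl_snoc: "z \<in> cyl (w @ [b]) \<longleftrightarrow> z \<in> cyl w \<and> z (length w) = b"
  unfolding cyl_def by (auto simp: nth_append less_Suc_eq)

lemma cyl_disj: "length w = length v \<Longrightarrow> w \<noteq> v \<Longrightarrow> cyl w \<inter> cyl v = {}"
  by (auto simp: cyl_iff)

lemma sdist_agree:
  assumes "0 < lam" "lam \<le> 1" "\<forall>i<N. u i = v i"
  shows "sdist lam u v \<le> lam ^ N"
proof (cases "u = v")
  case True then show ?thesis using assms by (simp add: sdist_def)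
next
  case False
  then obtain k where "u k \<noteq> v k" by auto
  then have "u (first_diff u v) \<noteq> v (first_diff u v)" unfolding first_diff_def by (rule LeastI)
  then have "N \<le> first_diff u v" using assms(3) by (meson not_le)
  then show ?thesis using False assms by (simp add: sdist_def power_decreasing)
qed

lemma sdist_nonneg: "0 < lam \<Longrightarrow> 0 \<le> sdist lam u v"
  by (simp add: sdist_def)

lemma ball_cyl:
  assumes "0 < lam" "lam < 1" "0 < \<epsilon>"
  shows "\<exists>K. {z. sdist lam z y < \<epsilon>} = cyl (pref K y)"
proof -
  obtain n where n: "lam ^ n < \<epsilon>" using real_arch_pow_inv[OF assms(3,2)] by blast
  define K where "K = (LEAST k. lam ^ k < \<epsilon>)"
  have K: "lam ^ K < \<epsilon>" unfolding K_def by (rule LeastI[of _ n]) (rule n)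
  have "sdist lam z y < \<epsilon> \<longleftrightarrow> (\<forall>i<K. z i = y i)" for z
  proof (cases "z = y")
    case True then show ?thesis using assms by (simp add: sdist_def)
  next
    case False
    define f where "f = first_diff z y"
    obtain k where "z k \<noteq> y k" using False by auto
    then have f1: "z f \<noteq> y f" unfolding f_def first_diff_def by (rule LeastI)
    have f2: "\<And>i. i < f \<Longrightarrow> z i = y i" unfolding f_def first_diff_def using not_less_Least by blast
    have "lam ^ f < \<epsilon> \<longleftrightarrow> K \<le> f"
    proof
      assume "lam ^ f < \<epsilon>" then show "K \<le> f" unfolding K_def by (rule Least_le)
    next
      assume "K \<le> f" then have "lam ^ f \<le> lam ^ K" using assms by (simp add: power_decreasing)
      then show "lam ^ f < \<epsilon>" using K by simp
    qed
    moreover have "K \<le> f \<longleftrightarrow> (\<forall>i<K. z i = y i)"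
      using f1 f2 by (meson le_less_trans not_le)
    ultimately show ?thesis using False by (simp add: sdist_def f_def)
  qed
  then show ?thesis by (auto simp: in_cyl_pref)
qed

lemma powr_pow_swap:
  fixes lam :: real
  assumes "0 < lam" shows "(lam ^ N) powr \<alpha> = (lam powr \<alpha>) ^ N"
  using assms by (simp add: powr_realpow[symmetric] powr_powr powr_power mult.commute)

lemma holder_agree:
  assumes "holder lam \<alpha> f" "0 < lam" "lam \<le> 1" "0 < \<alpha>"
  shows "\<exists>C\<ge>0. \<forall>N u v. (\<forall>i<N. u i = v i) \<longrightarrow> \<bar>f u - f v\<bar> \<le> C * (lam powr \<alpha>) ^ N"
proof -
  obtain C where C: "\<And>x y. \<bar>f x - f y\<bar> \<le> C * (sdist lam x y) powr \<alpha>"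
    using assms(1) unfolding holder_def by blast
  have "\<bar>f u - f v\<bar> \<le> max C 0 * (lam powr \<alpha>) ^ N" if "\<forall>i<N. u i = v i" for N u v
  proof -
    have "(sdist lam u v) powr \<alpha> \<le> (lam ^ N) powr \<alpha>"
      using sdist_nonneg sdist_agree that assms by (intro powr_mono2) auto
    then have d: "(sdist lam u v) powr \<alpha> \<le> (lam powr \<alpha>) ^ N"
      using assms powr_pow_swap by metis
    have "C * (sdist lam u v) powr \<alpha> \<le> max C 0 * (sdist lam u v) powr \<alpha>"
      by (intro mult_right_mono) auto
    also have "\<dots> \<le> max C 0 * (lam powr \<alpha>) ^ N"
      using d by (intro mult_left_mono) auto
    finally show ?thesis using C[of u v] by linarith
  qed
  then show ?thesis by (intro exI[of _ "max C 0"]) auto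
qed

text \<open>Hoelder functions are bounded, since any two points agree on no symbols.\<close>

lemma holder_bounded:
  assumes "holder lam \<alpha> f" "0 < lam" "lam \<le> 1" "0 < \<alpha>"
  shows "\<exists>B. \<forall>u. \<bar>f u\<bar> \<le> B"
proof -
  obtain C where C: "\<And>N u v. (\<forall>i<N. u i = v i) \<Longrightarrow> \<bar>f u - f v\<bar> \<le> C * (lam powr \<alpha>) ^ N"
    using holder_agree[OF assms] by blast
  have "\<bar>f u\<bar> \<le> \<bar>f undefined\<bar> + C" for u using C[of 0 u undefined] by auto
  then show ?thesis by blast
qed

section \<open>The measurable structure\<close>

lemma space_SM[simp]: "space SM = UNIV"
  by (simp add: SM_def space_PiM)

lemma cyl_sets[simp]: "cyl (w::'a list) \<in> sets SM"
proof -
  have coord: "{z::'a seq. z n = a} \<in> sets SM" for n a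
  proof -
    have "(\<lambda>z::'a seq. z n) \<in> measurable SM (count_space UNIV)"
      unfolding SM_def by (rule measurable_component_singleton) simp
    from measurable_sets[OF this, of "{a}"] show ?thesis by (simp add: vimage_def)
  qed
  have "{z::'a seq. \<forall>i<n. z i = w ! i} \<in> sets SM" for n
  proof (induction n)
    case 0 then show ?case using sets.top[of SM] by simp
  next
    case (Suc n)
    have e: "{z::'a seq. \<forall>i<Suc n. z i = w ! i} = {z. \<forall>i<n. z i = w ! i} \<inter> {z. z n = w ! n}"
      by (auto simp: less_Suc_eq)
    show ?case unfolding e by (rule sets.Int[OF Suc.IH coord])
  qed
  then show ?thesis unfolding cyl_def .
qed

lemma shift_meas: "shift \<in> measurable SM SM"
proof -
  have "(\<lambda>z i. z (Suc i)) \<in> measurable SM (SM::'a seq measure)"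
    unfolding SM_def
  proof (rule measurable_PiM_single')
    show "(\<lambda>z. z (Suc i)) \<in> measurable (PiM UNIV (\<lambda>_. count_space UNIV)) (count_space UNIV)" for i
      by (rule measurable_component_singleton) simp
  qed (simp add: space_PiM)
  then show ?thesis by (simp add: shift_def[abs_def])
qed

lemma pref_meas: "pref N \<in> measurable SM (count_space (UNIV::'a::finite list set))"
proof -
  have "pref N -` {w} = (if length w = N then cyl w else {})" for w :: "'a list"
    by (auto simp: cyl_iff)
  then show ?thesis
    unfolding measurable_count_space_eq2_countable by simp
qed

definition pad :: "'a list \<Rightarrow> 'a seq" where
  "pad w = (\<lambda>i. if i < length w then w ! i else undefined)"

text \<open>Hoelder functions are limits of functions of finitely many coordinates, hence measurable.\<close>

lemma holder_meas:
  fixes f :: "'a::finite seq \<Rightarrow> real"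
  assumes "holder lam \<alpha> f" "0 < lam" "lam < 1" "0 < \<alpha>"
  shows "f \<in> borel_measurable SM"
proof -
  obtain C where C: "\<And>N u v. (\<forall>i<N. u i = v i) \<Longrightarrow> \<bar>f u - f v\<bar> \<le> C * (lam powr \<alpha>) ^ N"
    using holder_agree[of lam \<alpha> f] assms by auto
  have th: "lam powr \<alpha> < 1" using powr_less_mono2[of \<alpha> lam 1] assms by simp
  show ?thesis
  proof (rule borel_measurable_LIMSEQ_real)
    fix N
    show "(\<lambda>z. f (pad (pref N z))) \<in> borel_measurable SM"
      using measurable_comp[OF pref_meas, of "\<lambda>w. f (pad w)"] by (simp add: o_def)
  next
    fix z :: "'a seq"
    have "eventually (\<lambda>N. norm (f (pad (pref N z)) - f z) \<le> C * (lam powr \<alpha>) ^ N) sequentially"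
      by (intro always_eventually allI) (simp only: real_norm_def, rule C, simp add: pad_def)
    moreover have "(\<lambda>N. C * (lam powr \<alpha>) ^ N) \<longlonglongrightarrow> 0"
      by (rule tendsto_mult_right_zero, rule LIMSEQ_power_zero) (use th in simp)
    ultimately have "(\<lambda>N. f (pad (pref N z)) - f z) \<longlonglongrightarrow> 0"
      by (rule Lim_null_comparison)
    then show "(\<lambda>N. f (pad (pref N z))) \<longlonglongrightarrow> f z"
      by (rule LIM_zero_cancel)
  qed
qed

lemma cyl_snoc_disj: "disjoint_family (\<lambda>b. cyl (w @ [b]))"
  unfolding disjoint_family_on_def by (auto simp: cyl_snoc)

lemma cyl_Cons_disj: "disjoint_family (\<lambda>b. cyl (b # w))"
  unfolding disjoint_family_on_def by (auto simp: cyl_Cons)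

lemma emeasure_cyl_snoc:
  fixes M :: "'a::finite seq measure"
  assumes "sets M = sets SM"
  shows "emeasure M (cyl w) = (\<Sum>b\<in>UNIV. emeasure M (cyl (w @ [b])))"
proof -
  have "(\<Sum>b\<in>UNIV. emeasure M (cyl (w @ [b]))) = emeasure M (\<Union>b\<in>UNIV. cyl (w @ [b]))"
    by (rule sum_emeasure) (use assms cyl_snoc_disj in auto)
  moreover have "cyl w = (\<Union>b. cyl (w @ [b]))" by (auto simp: cyl_snoc)
  ultimately show ?thesis by simp
qed

lemma emeasure_shift_vimage:
  fixes M :: "'a::finite seq measure"
  assumes "sets M = sets SM"
  shows "emeasure M (shift -` cyl w) = (\<Sum>b\<in>UNIV. emeasure M (cyl (b # w)))"
proof -
  have "(\<Sum>b\<in>UNIV. emeasure M (cyl (b # w))) = emeasure M (\<Union>b\<in>UNIV. cyl (b # w))"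
    by (rule sum_emeasure) (use assms cyl_Cons_disj in auto)
  moreover have "shift -` cyl w = (\<Union>b. cyl (b # w))" by (auto simp: cyl_Cons)
  ultimately show ?thesis by simp
qed

lemma prod_emb_UN_cyl:
  fixes A :: "nat \<Rightarrow> 'a set"
  assumes N: "J \<subseteq> {..<N}"
  shows "prod_emb UNIV (\<lambda>_. count_space UNIV) J (Pi\<^sub>E J A)
       = (\<Union>w\<in>{w. length w = N \<and> (\<forall>i\<in>J. w ! i \<in> A i)}. cyl w)"
proof (intro set_eqI iffI)
  fix z :: "'a seq"
  assume "z \<in> prod_emb UNIV (\<lambda>_. count_space UNIV) J (Pi\<^sub>E J A)"
  then have "\<forall>i\<in>J. z i \<in> A i" unfolding prod_emb_iff by (auto simp: PiE_iff)
  then have "pref N z \<in> {w. length w = N \<and> (\<forall>i\<in>J. w ! i \<in> A i)}" using N by auto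
  then show "z \<in> (\<Union>w\<in>{w. length w = N \<and> (\<forall>i\<in>J. w ! i \<in> A i)}. cyl w)"
    by (rule UN_I) (simp add: cyl_iff)
next
  fix z :: "'a seq"
  assume "z \<in> (\<Union>w\<in>{w. length w = N \<and> (\<forall>i\<in>J. w ! i \<in> A i)}. cyl w)"
  then have pz: "\<forall>i\<in>J. pref N z ! i \<in> A i" by (auto simp: cyl_iff)
  have "\<forall>i\<in>J. z i \<in> A i"
  proof
    fix i assume i: "i \<in> J" then have iN: "i < N" using N by auto
    then show "z i \<in> A i" using bspec[OF pz i] pref_nth[OF iN, of z] by simp
  qed
  then show "z \<in> prod_emb UNIV (\<lambda>_. count_space UNIV) J (Pi\<^sub>E J A)"
    unfolding prod_emb_iff restrict_PiE_iff by simp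
qed

text \<open>Cylinders generate the product sigma algebra: finite measures agreeing on them are equal.\<close>

lemma measure_eq_cyl:
  fixes M1 M2 :: "'a::finite seq measure"
  assumes s1: "sets M1 = sets SM" and s2: "sets M2 = sets SM" and fm: "finite_measure M1"
    and eq: "\<And>w. emeasure M1 (cyl w) = emeasure M2 (cyl w)"
  shows "M1 = M2"
proof (rule measure_eqI_PiM_infinite[of M1 UNIV "\<lambda>_. count_space UNIV" M2])
  show "sets M1 = sets (PiM UNIV (\<lambda>_. count_space (UNIV::'a set)))" using s1 by (simp add: SM_def)
  show "sets M2 = sets (PiM UNIV (\<lambda>_. count_space (UNIV::'a set)))" using s2 by (simp add: SM_def)
  show "finite_measure M1" by fact
next
  fix A :: "nat \<Rightarrow> 'a set" and J :: "nat set"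
  assume J: "finite J"
  obtain N where N: "J \<subseteq> {..<N}" using finite_nat_bounded[OF J] by blast
  define W where "W = {w::'a list. length w = N \<and> (\<forall>i\<in>J. w ! i \<in> A i)}"
  have "W \<subseteq> {xs. set xs \<subseteq> UNIV \<and> length xs = N}" unfolding W_def by auto
  then have fin: "finite W" by (rule finite_subset) (rule finite_lists_length_eq, simp)
  have D: "disjoint_family_on cyl W"
    unfolding disjoint_family_on_def
  proof (intro ballI impI)
    fix w v assume "w \<in> W" "v \<in> W" "w \<noteq> v"
    then show "cyl w \<inter> cyl v = {}" by (intro cyl_disj) (simp_all add: W_def)
  qed
  have c1: "cyl ` W \<subseteq> sets M1" unfolding s1 by (rule image_subsetI) (rule cyl_sets)
  have c2: "cyl ` W \<subseteq> sets M2" unfolding s2 by (rule image_subsetI) (rule cyl_sets)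
  have "emeasure M1 (\<Union>w\<in>W. cyl w) = (\<Sum>w\<in>W. emeasure M1 (cyl w))"
    using sum_emeasure[OF c1 D fin] by simp
  also have "\<dots> = (\<Sum>w\<in>W. emeasure M2 (cyl w))" using eq by simp
  also have "\<dots> = emeasure M2 (\<Union>w\<in>W. cyl w)"
    using sum_emeasure[OF c2 D fin] by simp
  finally show "emeasure M1 (prod_emb UNIV (\<lambda>_. count_space UNIV) J (Pi\<^sub>E J A)) =
      emeasure M2 (prod_emb UNIV (\<lambda>_. count_space UNIV) J (Pi\<^sub>E J A))"
    unfolding prod_emb_UN_cyl[OF N] W_def[symmetric] .
qed

section \<open>The support of a measure\<close>

lemma msupp_cyl:
  fixes \<mu> :: "'a::finite seq measure"
  assumes y: "y \<in> msupp lam \<mu>" and s: "sets \<mu> = sets SM" and l: "0 < lam" "lam < 1"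
  shows "emeasure \<mu> (cyl (pref K y)) \<noteq> 0"
proof -
  define ball where "ball = {z. sdist lam z y < lam ^ K}"
  have mpos: "measure \<mu> ball > 0" using y l unfolding msupp_def ball_def by simp
  have bs: "ball \<in> sets \<mu>"
  proof (rule ccontr)
    assume "ball \<notin> sets \<mu>"
    then have "emeasure \<mu> ball = 0" by (rule emeasure_notin_sets)
    then show False using mpos by (simp add: measure_def)
  qed
  have sub: "ball \<subseteq> cyl (pref K y)"
  proof
    fix z assume "z \<in> ball"
    then have zb: "sdist lam z y < lam ^ K" unfolding ball_def by simp
    show "z \<in> cyl (pref K y)"
    proof (cases "z = y")
      case True then show ?thesis by (simp add: in_cyl_pref)
    next
      case False
      then have "lam ^ first_diff z y < lam ^ K" using zb by (simp add: sdist_def)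
      then have K: "K < first_diff z y" using l by simp
      have "z i = y i" if "i < K" for i
        using that K not_less_Least[of i "\<lambda>k. z k \<noteq> y k"] unfolding first_diff_def by auto
      then show ?thesis by (simp add: in_cyl_pref)
    qed
  qed
  have "emeasure \<mu> ball \<le> emeasure \<mu> (cyl (pref K y))" by (rule emeasure_mono[OF sub]) (simp add: s)
  moreover have "emeasure \<mu> ball \<noteq> 0" using mpos by (auto simp: measure_def)
  ultimately show ?thesis by (auto simp: le_zero_eq)
qed

lemma cyl_msupp:
  fixes \<mu> :: "'a::finite seq measure"
  assumes c: "\<And>K. emeasure \<mu> (cyl (pref K y)) \<noteq> 0" and s: "sets \<mu> = sets SM" and f: "finite_measure \<mu>"
    and l: "0 < lam" "lam < 1"
  shows "y \<in> msupp lam \<mu>"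
  unfolding msupp_def
proof (intro CollectI allI impI)
  fix \<epsilon> :: real assume "0 < \<epsilon>"
  then obtain K where K: "{z. sdist lam z y < \<epsilon>} = cyl (pref K y)" using ball_cyl l by blast
  have "emeasure \<mu> (cyl (pref K y)) < top" using finite_measure.emeasure_finite[OF f] by (simp add: top.not_eq_extremum)
  moreover have "0 < emeasure \<mu> (cyl (pref K y))" using c[of K] by (simp add: zero_less_iff_neq_zero)
  ultimately show "measure \<mu> {z. sdist lam z y < \<epsilon>} > 0" unfolding K measure_def by (simp add: enn2real_positive_iff)
qed

text \<open>Every probability measure has a point in its support, found by successively choosing a
  one-symbol extension of positive measure (a compactness argument).\<close>

primrec heavy_word :: "'a::finite seq measure \<Rightarrow> nat \<Rightarrow> 'a list" where
  "heavy_word M 0 = []"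
| "heavy_word M (Suc N) = heavy_word M N @ [SOME b. emeasure M (cyl (heavy_word M N @ [b])) \<noteq> 0]"

lemma exists_heavy_point:
  fixes M :: "'a::finite seq measure"
  assumes p: "prob_space M" and s: "sets M = sets SM"
  shows "\<exists>y. \<forall>N. emeasure M (cyl (pref N y)) \<noteq> 0"
proof -
  have len: "length (heavy_word M N) = N" for N by (induction N) simp_all
  have pos: "emeasure M (cyl (heavy_word M N)) \<noteq> 0" for N
  proof (induction N)
    case 0
    have "cyl ([]::'a list) = space M" using sets_eq_imp_space_eq[OF s] by (simp add: cyl_def)
    then show ?case using prob_space.emeasure_space_1[OF p] by simp
  next
    case (Suc N)
    have "(\<Sum>b\<in>UNIV. emeasure M (cyl (heavy_word M N @ [b]))) \<noteq> 0"
      using Suc emeasure_cyl_snoc[OF s, of "heavy_word M N"] by simp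
    then have "\<exists>b. emeasure M (cyl (heavy_word M N @ [b])) \<noteq> 0"
      by (metis (no_types, lifting) sum.neutral)
    then have "emeasure M (cyl (heavy_word M N @ [SOME b. emeasure M (cyl (heavy_word M N @ [b])) \<noteq> 0])) \<noteq> 0"
      by (rule someI_ex)
    then show ?case by simp
  qed
  define y where "y N = heavy_word M (Suc N) ! N" for N
  have "pref N y = heavy_word M N" for N
  proof (induction N)
    case 0 then show ?case by (simp add: pref_def)
  next
    case (Suc N)
    have "pref (Suc N) y = pref N y @ [y N]" by (simp add: pref_def)
    also have "\<dots> = heavy_word M N @ [y N]" using Suc by simp
    also have "y N = (SOME b. emeasure M (cyl (heavy_word M N @ [b])) \<noteq> 0)"
      unfolding y_def using len[of N] by (simp add: nth_append)
    finally show ?case by simp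
  qed
  then show ?thesis using pos by metis
qed

lemma msupp_shift:
  fixes \<mu> :: "'a::finite seq measure"
  assumes inv: "invariant_prob \<mu>" and y: "y \<in> msupp lam \<mu>" and lam0: "0 < lam" and lam1: "lam < 1"
  shows "shift y \<in> msupp lam \<mu>"
proof -
  have p: "prob_space \<mu>" and s: "sets \<mu> = sets SM" and d: "distr \<mu> SM shift = \<mu>"
    using inv unfolding invariant_prob_def by auto
  have fm: "finite_measure \<mu>" using p unfolding prob_space_def by simp
  have spm: "space \<mu> = UNIV" using sets_eq_imp_space_eq[OF s] by simp
  have sm: "shift \<in> measurable \<mu> SM" using shift_meas by (simp add: measurable_cong_sets[OF s refl])
  have "emeasure \<mu> (cyl (pref K (shift y))) \<noteq> 0" for K
  proof -
    have "emeasure \<mu> (cyl (pref K (shift y))) = emeasure (distr \<mu> SM shift) (cyl (pref K (shift y)))"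
      using d by simp
    also have "\<dots> = emeasure \<mu> (shift -` cyl (pref K (shift y)) \<inter> space \<mu>)"
      by (rule emeasure_distr[OF sm cyl_sets])
    finally have e: "emeasure \<mu> (cyl (pref K (shift y))) = emeasure \<mu> (shift -` cyl (pref K (shift y)))"
      using spm by simp
    have sub: "cyl (pref (Suc K) y) \<subseteq> shift -` cyl (pref K (shift y))"
      by (auto simp: in_cyl_pref shift_def)
    have "shift -` cyl (pref K (shift y)) \<in> sets \<mu>"
      using measurable_sets[OF sm cyl_sets[of "pref K (shift y)"]] spm by simp
    then have "emeasure \<mu> (cyl (pref (Suc K) y)) \<le> emeasure \<mu> (shift -` cyl (pref K (shift y)))"
      by (rule emeasure_mono[OF sub])
    moreover have "emeasure \<mu> (cyl (pref (Suc K) y)) \<noteq> 0" by (rule msupp_cyl[OF y s lam0 lam1])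
    ultimately show ?thesis unfolding e by (auto simp: le_zero_eq)
  qed
  then show ?thesis by (rule cyl_msupp[OF _ s fm lam0 lam1])
qed

section \<open>Measures given by consistent cylinder weights\<close>

text \<open>A weight function P on words with P [] = 1 and P w = sum of P over the one-symbol
  right extensions of w defines a probability measure on sequences with P w as the measure of
  the cylinder of w.  We obtain it as the image of Lebesgue measure on [0,1): each word w gets
  a half-open interval of length P w, the intervals of the extensions of w subdivide that of w
  in the order given by an enumeration of the alphabet, and a number u in [0,1) is coded by
  the sequence whose prefixes have intervals containing u.\<close>

definition symbol :: "nat \<Rightarrow> 'a::finite" where
  "symbol = (SOME h. bij_betw h {0..<CARD('a)} (UNIV::'a set))"

lemma symbol_bij: "bij_betw (symbol::nat \<Rightarrow> 'a::finite) {0..<CARD('a)} UNIV"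
proof -
  have "\<exists>h. bij_betw h {0..<CARD('a)} (UNIV::'a set)"
    using ex_bij_betw_nat_finite[of "UNIV::'a set"] by simp
  then show ?thesis unfolding symbol_def by (rule someI_ex)
qed

definition symbol_index :: "'a::finite \<Rightarrow> nat" where
  "symbol_index b = inv_into {0..<CARD('a)} symbol b"

lemma symbol_index_less: "symbol_index (b::'a::finite) < CARD('a)"
proof -
  have "b \<in> symbol ` {0..<CARD('a)}" using symbol_bij[where 'a='a] by (simp add: bij_betw_def)
  then show ?thesis unfolding symbol_index_def by (metis atLeastLessThan_iff inv_into_into)
qed

lemma symbol_symbol_index[simp]: "symbol (symbol_index (b::'a::finite)) = b"
proof -
  have "b \<in> symbol ` {0..<CARD('a)}" using symbol_bij[where 'a='a] by (simp add: bij_betw_def)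
  then show ?thesis unfolding symbol_index_def by (rule f_inv_into_f)
qed

lemma symbol_index_symbol[simp]: "k < CARD('a) \<Longrightarrow> symbol_index (symbol k :: 'a::finite) = k"
  unfolding symbol_index_def using symbol_bij[where 'a='a]
  by (simp add: bij_betw_def inv_into_f_f)

lemma sum_symbol: "(\<Sum>b\<in>(UNIV::'a::finite set). f b) = (\<Sum>k<CARD('a). f (symbol k))"
proof -
  have "(\<Sum>k\<in>{0..<CARD('a)}. f (symbol k)) = (\<Sum>b\<in>(UNIV::'a set). f b)"
    by (rule sum.reindex_bij_betw[OF symbol_bij])
  then show ?thesis by (simp add: atLeast0LessThan)
qed

text \<open>The interval of w is [word_start P w, word_start P w + P w); word_cut P w k is the left
  end point of the interval of the extension of w by the k-th symbol.\<close>

definition word_start :: "('a::finite list \<Rightarrow> real) \<Rightarrow> 'a list \<Rightarrow> real" where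
  "word_start P w = (\<Sum>n<length w. \<Sum>k<symbol_index (w ! n). P (take n w @ [symbol k]))"

definition word_interval :: "('a::finite list \<Rightarrow> real) \<Rightarrow> 'a list \<Rightarrow> real set" where
  "word_interval P w = {word_start P w ..< word_start P w + P w}"

definition word_cut :: "('a::finite list \<Rightarrow> real) \<Rightarrow> 'a list \<Rightarrow> nat \<Rightarrow> real" where
  "word_cut P w k = word_start P w + (\<Sum>i<k. P (w @ [symbol i]))"

lemma word_start_Nil[simp]: "word_start P [] = 0" by (simp add: word_start_def)

lemma word_start_snoc: "word_start P (w @ [b]) = word_start P w + (\<Sum>k<symbol_index b. P (w @ [symbol k]))"
proof -
  have "word_start P (w @ [b]) = (\<Sum>n<Suc (length w). \<Sum>k<symbol_index ((w @ [b]) ! n). P (take n (w @ [b]) @ [symbol k]))"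
    by (simp add: word_start_def)
  also have "\<dots> = (\<Sum>n<length w. \<Sum>k<symbol_index ((w @ [b]) ! n). P (take n (w @ [b]) @ [symbol k]))
      + (\<Sum>k<symbol_index b. P (w @ [symbol k]))"
    by (simp add: nth_append)
  also have "(\<Sum>n<length w. \<Sum>k<symbol_index ((w @ [b]) ! n). P (take n (w @ [b]) @ [symbol k])) = word_start P w"
    unfolding word_start_def by (intro sum.cong refl) (auto simp: nth_append)
  finally show ?thesis .
qed

lemma word_start_snoc_symbol: "k < CARD('a) \<Longrightarrow> word_start P (w @ [symbol k :: 'a::finite]) = word_cut P w k"
  by (simp add: word_start_snoc word_cut_def)

lemma word_cut_Suc: "word_cut P w (Suc k) = word_cut P w k + P (w @ [symbol k])"
  by (simp add: word_cut_def)

locale cylinder_weights =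
  fixes P :: "'a::finite list \<Rightarrow> real"
  assumes P_nonneg: "\<And>w. 0 \<le> P w"
    and P_Nil: "P [] = 1"
    and P_snoc: "\<And>w. P w = (\<Sum>b\<in>UNIV. P (w @ [b]))"
begin

lemma word_cut_mono: "i \<le> j \<Longrightarrow> word_cut P w i \<le> word_cut P w j"
proof (induction j)
  case 0 then show ?case by simp
next
  case (Suc j)
  show ?case
  proof (cases "i = Suc j")
    case True then show ?thesis by simp
  next
    case False
    then have "word_cut P w i \<le> word_cut P w j" using Suc by simp
    also have "\<dots> \<le> word_cut P w (Suc j)" using P_nonneg[of "w @ [symbol j]"] by (simp add: word_cut_Suc)
    finally show ?thesis .
  qed
qed

lemma word_cut_0: "word_cut P w 0 = word_start P w" by (simp add: word_cut_def)

lemma word_cut_card: "word_cut P w CARD('a) = word_start P w + P w"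
  using P_snoc[of w] by (simp add: word_cut_def sum_symbol)

text \<open>The extension of w whose interval contains a given point u of the interval of w.\<close>

definition next_index :: "'a list \<Rightarrow> real \<Rightarrow> nat" where
  "next_index w u = Max {k. k < CARD('a) \<and> word_cut P w k \<le> u}"

lemma next_index_props:
  assumes "u \<in> word_interval P w"
  shows "next_index w u < CARD('a) \<and> u \<in> word_interval P (w @ [symbol (next_index w u)])"
proof -
  define K where "K = {k. k < CARD('a) \<and> word_cut P w k \<le> u}"
  have fK: "finite K" unfolding K_def by simp
  have "0 \<in> K" using assms unfolding K_def word_interval_def by (simp add: word_cut_0)
  then have ne: "K \<noteq> {}" by blast
  have kK: "next_index w u \<in> K" unfolding next_index_def K_def[symmetric] using fK ne by (rule Max_in)
  define k where "k = next_index w u"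
  have k1: "k < CARD('a)" "word_cut P w k \<le> u" using kK unfolding K_def k_def by auto
  have k2: "u < word_cut P w (Suc k)"
  proof (cases "Suc k < CARD('a)")
    case True
    have "Suc k \<notin> K"
    proof
      assume "Suc k \<in> K"
      then have "Suc k \<le> Max K" by (intro Max_ge fK)
      then show False unfolding k_def next_index_def K_def by simp
    qed
    then show ?thesis using True unfolding K_def by auto
  next
    case False
    then have "Suc k = CARD('a)" using k1 by simp
    then show ?thesis using assms word_cut_card[of w] unfolding word_interval_def by simp
  qed
  have "u \<in> word_interval P (w @ [symbol k])"
    unfolding word_interval_def using k1 k2 by (simp add: word_start_snoc_symbol word_cut_Suc)
  then show ?thesis using k1 unfolding k_def by simp
qed

lemma word_interval_snoc_sub: "word_interval P (w @ [b]) \<subseteq> word_interval P w"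
proof -
  define k where "k = symbol_index b"
  have k: "k < CARD('a)" "b = symbol k" unfolding k_def by (simp_all add: symbol_index_less)
  have "word_start P w \<le> word_cut P w k" using word_cut_mono[of 0 k w] by (simp add: word_cut_0)
  moreover have "word_cut P w (Suc k) \<le> word_start P w + P w" using word_cut_mono[of "Suc k" "CARD('a)" w] k word_cut_card[of w] by simp
  ultimately show ?thesis unfolding word_interval_def k(2) using k(1) by (auto simp: word_start_snoc_symbol word_cut_Suc)
qed

lemma word_interval_snoc_unique:
  assumes "u \<in> word_interval P (w @ [b])" "u \<in> word_interval P (w @ [c])"
  shows "b = c"
proof (rule ccontr)
  assume ne: "b \<noteq> c"
  define i where "i = symbol_index b"
  define j where "j = symbol_index c"
  have ij: "i < CARD('a)" "j < CARD('a)" "b = symbol i" "c = symbol j"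
    unfolding i_def j_def by (simp_all add: symbol_index_less)
  have "i \<noteq> j" using ne ij by auto
  have ui: "word_cut P w i \<le> u" "u < word_cut P w (Suc i)"
    using assms(1) ij unfolding word_interval_def by (simp_all add: word_start_snoc_symbol word_cut_Suc)
  have uj: "word_cut P w j \<le> u" "u < word_cut P w (Suc j)"
    using assms(2) ij unfolding word_interval_def by (simp_all add: word_start_snoc_symbol word_cut_Suc)
  show False
  proof (cases "i < j")
    case True
    then have "word_cut P w (Suc i) \<le> word_cut P w j" by (intro word_cut_mono) simp
    then show False using ui uj by simp
  next
    case False
    then have "j < i" using \<open>i \<noteq> j\<close> by simp
    then have "word_cut P w (Suc j) \<le> word_cut P w i" by (intro word_cut_mono) simp
    then show False using ui uj by simp
  qed
qed

lemma word_interval_unique: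
  "length w = length v \<Longrightarrow> u \<in> word_interval P w \<Longrightarrow> u \<in> word_interval P v \<Longrightarrow> w = v"
proof (induction w arbitrary: v rule: rev_induct)
  case Nil then show ?case by simp
next
  case (snoc b w)
  obtain v' c where v: "v = v' @ [c]"
    using snoc.prems(1) by (metis length_append_singleton rev_exhaust length_0_conv nat.distinct(1))
  have l: "length w = length v'" using snoc.prems(1) v by simp
  have "u \<in> word_interval P w" using snoc.prems(2) word_interval_snoc_sub by blast
  moreover have "u \<in> word_interval P v'" using snoc.prems(3) word_interval_snoc_sub unfolding v by blast
  ultimately have "w = v'" using snoc.IH l by blast
  then have "b = c" using snoc.prems(2,3) v word_interval_snoc_unique by simp
  then show ?case using \<open>w = v'\<close> v by simp
qed

lemma word_interval_sub01: "word_interval P w \<subseteq> {0..<1}"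
proof (induction w rule: rev_induct)
  case Nil then show ?case by (simp add: word_interval_def P_Nil)
next
  case (snoc b w) then show ?case using word_interval_snoc_sub by blast
qed

text \<open>The coding of u in [0,1) by a sequence: code_word u N is its prefix of length N.\<close>

primrec code_word :: "real \<Rightarrow> nat \<Rightarrow> 'a list" where
  "code_word u 0 = []"
| "code_word u (Suc N) = code_word u N @ [symbol (next_index (code_word u N) u)]"

lemma length_code_word[simp]: "length (code_word u N) = N"
  by (induction N) simp_all

lemma code_word_in: "u \<in> {0..<1} \<Longrightarrow> u \<in> word_interval P (code_word u N)"
proof (induction N)
  case 0 then show ?case by (simp add: word_interval_def P_Nil)
next
  case (Suc N) then show ?case using next_index_props[of u "code_word u N"] by simp
qed

definition code_point :: "real \<Rightarrow> 'a seq" where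
  "code_point u = (if u \<in> {0..<1} then (\<lambda>n. symbol (next_index (code_word u n) u)) else (\<lambda>_. undefined))"

lemma pref_code_point: "u \<in> {0..<1} \<Longrightarrow> pref N (code_point u) = code_word u N"
  by (induction N) (simp_all add: pref_def code_point_def)

lemma code_point_cyl: "u \<in> {0..<1} \<Longrightarrow> code_point u \<in> cyl w \<longleftrightarrow> u \<in> word_interval P w"
proof
  assume u: "u \<in> {0..<1}" and "code_point u \<in> cyl w"
  then have "code_word u (length w) = w" using pref_code_point cyl_iff by metis
  then show "u \<in> word_interval P w" using code_word_in[OF u, of "length w"] by simp
next
  assume u: "u \<in> {0..<1}" and "u \<in> word_interval P w"
  then have "code_word u (length w) = w" using word_interval_unique[of "code_word u (length w)" w u] code_word_in[OF u] by simp
  then show "code_point u \<in> cyl w" using pref_code_point[OF u] cyl_iff by metis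
qed

end

definition unit_meas :: "real measure" where "unit_meas = uniform_measure lborel {0..<1}"

lemma sets_unit_meas[simp]: "sets unit_meas = sets lborel" by (simp add: unit_meas_def uniform_measure_def)
lemma space_unit_meas[simp]: "space unit_meas = UNIV" by (simp add: unit_meas_def uniform_measure_def)

lemma unit_meas_prob: "prob_space unit_meas"
  unfolding unit_meas_def by (rule prob_space_uniform_measure) simp_all

context cylinder_weights
begin

lemma code_point_coord_eq:
  assumes u: "u \<in> {0..<1}"
  shows "code_point u n = b \<longleftrightarrow> u \<in> (\<Union>v\<in>{v. length v = Suc n \<and> v ! n = b}. word_interval P v)"
proof
  assume "code_point u n = b"
  moreover have "u \<in> word_interval P (pref (Suc n) (code_point u))"
    using code_point_cyl[OF u, of "pref (Suc n) (code_point u)"] by (simp add: cyl_iff)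
  ultimately show "u \<in> (\<Union>v\<in>{v. length v = Suc n \<and> v ! n = b}. word_interval P v)"
    by (intro UN_I[of "pref (Suc n) (code_point u)"]) simp_all
next
  assume "u \<in> (\<Union>v\<in>{v. length v = Suc n \<and> v ! n = b}. word_interval P v)"
  then obtain v where v: "length v = Suc n" "v ! n = b" "u \<in> word_interval P v" by blast
  then have "code_point u \<in> cyl v" using code_point_cyl[OF u] by simp
  then have "pref (Suc n) (code_point u) = v" using v(1) by (simp add: cyl_iff)
  then show "code_point u n = b" using v(2) by (metis lessI pref_nth)
qed

lemma code_point_coord_meas: "(\<lambda>u. code_point u n) \<in> measurable lborel (count_space UNIV)"
  unfolding measurable_count_space_eq2_countable
proof (intro conjI ballI)
  show "(\<lambda>u. code_point u n) \<in> space lborel \<rightarrow> UNIV" by simp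
next
  fix b :: 'a
  define V where "V = {v::'a list. length v = Suc n \<and> v ! n = b}"
  have "V \<subseteq> {xs. set xs \<subseteq> UNIV \<and> length xs = Suc n}" unfolding V_def by auto
  then have fV: "finite V" by (rule finite_subset) (rule finite_lists_length_eq, simp)
  have "(\<lambda>u. code_point u n) -` {b} \<inter> space lborel =
      ({0..<1} \<inter> (\<Union>v\<in>V. word_interval P v)) \<union> (- {0..<1} \<inter> {u. (undefined::'a) = b})"
  proof (intro set_eqI)
    fix u :: real
    show "u \<in> (\<lambda>u. code_point u n) -` {b} \<inter> space lborel \<longleftrightarrow>
        u \<in> ({0..<1} \<inter> (\<Union>v\<in>V. word_interval P v)) \<union> (- {0..<1} \<inter> {u. (undefined::'a) = b})"
    proof (cases "u \<in> {0..<1}")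
      case True then show ?thesis using code_point_coord_eq[OF True, of n b] by (simp add: V_def)
    next
      case False
      then have "code_point u = (\<lambda>_. undefined)" unfolding code_point_def by (rule if_not_P)
      then show ?thesis using False by auto
    qed
  qed
  moreover have "(\<Union>v\<in>V. word_interval P v) \<in> sets lborel"
    using fV by (intro sets.finite_UN) (simp_all add: word_interval_def)
  ultimately show "(\<lambda>u. code_point u n) -` {b} \<inter> space lborel \<in> sets lborel"
    by (cases "(undefined::'a) = b") (auto intro: borel_comp)
qed

lemma code_point_meas: "code_point \<in> measurable unit_meas SM"
proof -
  have "(\<lambda>u n. code_point u n) \<in> measurable lborel SM"
    unfolding SM_def
    by (rule measurable_PiM_single'[OF code_point_coord_meas]) (simp add: space_PiM)
  then show ?thesis by (simp add: measurable_cong_sets[OF sets_unit_meas refl])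
qed

definition weight_measure :: "'a seq measure" where "weight_measure = distr unit_meas SM code_point"

lemma sets_weight_measure[simp]: "sets weight_measure = sets SM" by (simp add: weight_measure_def)

lemma weight_measure_prob: "prob_space weight_measure"
  unfolding weight_measure_def by (rule prob_space.prob_space_distr[OF unit_meas_prob code_point_meas])

lemma emeasure_weight_measure_cyl: "emeasure weight_measure (cyl w) = ennreal (P w)"
proof -
  have m0: "code_point -` cyl w \<inter> space unit_meas \<in> sets unit_meas"
    by (rule measurable_sets[OF code_point_meas cyl_sets])
  then have m: "code_point -` cyl w \<in> sets borel" by simp
  have e: "{0..<1} \<inter> (code_point -` cyl w \<inter> space unit_meas) = word_interval P w"
  proof (intro set_eqI iffI)
    fix u assume "u \<in> {0..<1} \<inter> (code_point -` cyl w \<inter> space unit_meas)"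
    then show "u \<in> word_interval P w" using code_point_cyl by auto
  next
    fix u assume a: "u \<in> word_interval P w"
    then have u: "u \<in> {0..<1}" using word_interval_sub01 by blast
    then show "u \<in> {0..<1} \<inter> (code_point -` cyl w \<inter> space unit_meas)" using code_point_cyl[OF u] a by simp
  qed
  have "emeasure weight_measure (cyl w) = emeasure unit_meas (code_point -` cyl w \<inter> space unit_meas)"
    unfolding weight_measure_def by (rule emeasure_distr[OF code_point_meas cyl_sets])
  also have "\<dots> = emeasure lborel ({0..<1} \<inter> (code_point -` cyl w \<inter> space unit_meas)) / emeasure lborel {0..<1::real}"
    unfolding unit_meas_def by (rule emeasure_uniform_measure) (simp_all add: m)
  also have "\<dots> = emeasure lborel (word_interval P w)" unfolding e by (simp add: divide_ennreal_def)
  also have "\<dots> = ennreal (P w)" unfolding word_interval_def using P_nonneg[of w] by simp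
  finally show ?thesis .
qed

end

section \<open>Invariant measures as limits of orbit frequencies\<close>

definition visits :: "(nat \<Rightarrow> 'a seq) \<Rightarrow> nat \<Rightarrow> 'a list \<Rightarrow> real" where
  "visits s k w = (\<Sum>j<k. indicator (cyl w) (s j))"

definition visit_freq :: "(nat \<Rightarrow> 'a seq) \<Rightarrow> nat \<Rightarrow> 'a list \<Rightarrow> real" where
  "visit_freq s k w = visits s k w / real k"

lemma indicator_cyl_snoc: "indicator (cyl w) z = (\<Sum>b\<in>(UNIV::'a::finite set). indicator (cyl (w @ [b])) z :: real)"
proof -
  have "(\<Sum>b\<in>(UNIV::'a set). indicator (cyl (w @ [b])) z :: real) =
      (\<Sum>b\<in>(UNIV::'a set). if b = z (length w) then indicator (cyl w) z else 0)"
    by (intro sum.cong refl) (auto simp: cyl_snoc indicator_def)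
  also have "\<dots> = indicator (cyl w) z" by (simp add: sum.delta')
  finally show ?thesis by simp
qed

lemma indicator_cyl_shift: "indicator (cyl w) (shift z) = (\<Sum>b\<in>(UNIV::'a::finite set). indicator (cyl (b # w)) z :: real)"
proof -
  have "(\<Sum>b\<in>(UNIV::'a set). indicator (cyl (b # w)) z :: real) =
      (\<Sum>b\<in>(UNIV::'a set). if b = z 0 then indicator (cyl w) (shift z) else 0)"
    by (intro sum.cong refl) (auto simp: cyl_Cons indicator_def)
  also have "\<dots> = indicator (cyl w) (shift z)" by (simp add: sum.delta')
  finally show ?thesis by simp
qed

lemma visits_snoc: "visits s k w = (\<Sum>b\<in>(UNIV::'a::finite set). visits s k (w @ [b]))"
  unfolding visits_def by (subst sum.swap) (simp add: indicator_cyl_snoc[symmetric])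

lemma visit_freq_snoc: "visit_freq s k w = (\<Sum>b\<in>(UNIV::'a::finite set). visit_freq s k (w @ [b]))"
  unfolding visit_freq_def by (simp add: visits_snoc[of s k w] sum_divide_distrib)

lemma visits_Nil: "visits s k [] = real k"
  by (simp add: visits_def cyl_def)

lemma visits_bounds: "0 \<le> visits s k w" "visits s k w \<le> real k"
proof -
  show "0 \<le> visits s k w" unfolding visits_def by (intro sum_nonneg) (simp add: indicator_def)
  have "visits s k w \<le> (\<Sum>j<k. 1)" unfolding visits_def by (intro sum_mono) (simp add: indicator_def)
  then show "visits s k w \<le> real k" by simp
qed

lemma visit_freq_bounds: "0 \<le> visit_freq s k w" "visit_freq s k w \<le> 1"
proof -
  show "0 \<le> visit_freq s k w" unfolding visit_freq_def by (intro divide_nonneg_nonneg visits_bounds(1)) simp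
  show "visit_freq s k w \<le> 1"
  proof (cases "k = 0")
    case True then show ?thesis by (simp add: visit_freq_def)
  next
    case False then show ?thesis unfolding visit_freq_def using visits_bounds(2)[of s k w] by simp
  qed
qed

text \<open>Along a forward or backward orbit, visits to the cylinder of w and visits to its preimage
  under the shift differ by at most one: this makes limit frequencies shift invariant.\<close>

lemma visits_Cons_diff:
  fixes s :: "nat \<Rightarrow> 'a::finite seq"
  assumes H: "(\<forall>j. shift (s j) = s (Suc j)) \<or> (\<forall>j. shift (s (Suc j)) = s j)"
  shows "\<bar>(\<Sum>b\<in>UNIV. visits s k (b # w)) - visits s k w\<bar> \<le> 1"
proof -
  have e: "(\<Sum>b\<in>UNIV. visits s k (b # w)) = (\<Sum>j<k. indicator (cyl w) (shift (s j)))"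
    unfolding visits_def by (subst sum.swap) (simp add: indicator_cyl_shift)
  from H show ?thesis
  proof
    assume f: "\<forall>j. shift (s j) = s (Suc j)"
    have "(\<Sum>j<Suc k. indicator (cyl w) (s j) :: real) = indicator (cyl w) (s 0) + (\<Sum>j<k. indicator (cyl w) (s (Suc j)))"
      by (rule sum.lessThan_Suc_shift)
    moreover have "(\<Sum>j<Suc k. indicator (cyl w) (s j) :: real) = visits s k w + indicator (cyl w) (s k)"
      by (simp add: visits_def)
    moreover have "(\<Sum>j<k. indicator (cyl w) (shift (s j)) :: real) = (\<Sum>j<k. indicator (cyl w) (s (Suc j)))"
      using f by simp
    ultimately have "(\<Sum>j<k. indicator (cyl w) (shift (s j)) :: real) = visits s k w + indicator (cyl w) (s k) - indicator (cyl w) (s 0)"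
      by simp
    moreover have "\<bar>indicator (cyl w) (s k) - indicator (cyl w) (s 0)\<bar> \<le> (1::real)"
        by (simp add: indicator_def)
    ultimately show ?thesis using e by simp
  next
    assume b: "\<forall>j. shift (s (Suc j)) = s j"
    show ?thesis
    proof (cases k)
      case 0 then show ?thesis using e by (simp add: visits_def)
    next
      case (Suc k')
      have "(\<Sum>j<Suc k'. indicator (cyl w) (shift (s j)) :: real) = indicator (cyl w) (shift (s 0)) + (\<Sum>j<k'. indicator (cyl w) (shift (s (Suc j))))"
        by (rule sum.lessThan_Suc_shift)
      also have "(\<Sum>j<k'. indicator (cyl w) (shift (s (Suc j))) :: real) = visits s k' w"
        using b by (simp add: visits_def)
      finally have 1: "(\<Sum>j<k. indicator (cyl w) (shift (s j)) :: real) = indicator (cyl w) (shift (s 0)) + visits s k' w"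
        using Suc by simp
      have 2: "visits s k w = visits s k' w + indicator (cyl w) (s k')" using Suc by (simp add: visits_def)
      have "\<bar>indicator (cyl w) (shift (s 0)) - indicator (cyl w) (s k')\<bar> \<le> (1::real)"
        by (simp add: indicator_def)
      then show ?thesis using e 1 2 by simp
    qed
  qed
qed



lemma common_convergent_subseq:
  fixes f :: "'b::countable \<Rightarrow> nat \<Rightarrow> real"
  assumes bnd: "\<And>w k. \<bar>f w k\<bar> \<le> B"
  shows "\<exists>r. strict_mono r \<and> (\<forall>w. convergent (\<lambda>i. f w (r i)))"
proof -
  define PP where "PP n r = convergent (\<lambda>i. f (from_nat n) (r i))" for n r
  interpret subseqs PP
  proof
    fix n and s' :: "nat \<Rightarrow> nat" assume "strict_mono s'"
    obtain g where g: "strict_mono g" "monoseq (\<lambda>i. f (from_nat n) (s' (g i)))"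
      using seq_monosub[of "\<lambda>i. f (from_nat n) (s' i)"] by blast
    have "Bseq (\<lambda>i. f (from_nat n) (s' (g i)))"
      using bnd by (intro BseqI'[where K=B]) simp
    then have "convergent (\<lambda>i. f (from_nat n) (s' (g i)))"
      using g(2) by (rule Bseq_monoseq_convergent)
    then show "\<exists>r'. strict_mono r' \<and> PP n (s' \<circ> r')"
      using g(1) unfolding PP_def by (intro exI[of _ g]) (simp add: o_def)
  qed
  have sub: "PP n (s \<circ> r)" if r: "strict_mono r" and c: "PP n s" for r s n
  proof -
    obtain L where "(\<lambda>i. f (from_nat n) (s i)) \<longlonglongrightarrow> L"
      using c by (auto simp: PP_def convergent_def)
    then have "((\<lambda>i. f (from_nat n) (s i)) \<circ> r) \<longlonglongrightarrow> L"
      by (rule LIMSEQ_subseq_LIMSEQ[OF _ r])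
    then show ?thesis by (auto simp: PP_def convergent_def o_def)
  qed
  have "convergent (\<lambda>i. f w (diagseq i))" for w
  proof -
    have "PP (to_nat w) (diagseq \<circ> (+) (Suc (to_nat w)))"
      by (rule diagseq_holds[OF sub])
    then have "convergent (\<lambda>i. f w (diagseq (i + Suc (to_nat w))))"
      unfolding PP_def by (simp add: o_def add.commute)
    then show ?thesis
      by (rule iffD1[OF convergent_ignore_initial_segment])
  qed
  then show ?thesis using subseq_diagseq by blast
qed

text \<open>Weights that are also consistent with respect to left extensions give a shift-invariant
  measure, since the preimage of a cylinder is the union of its left extensions.\<close>

lemma (in cylinder_weights) weight_measure_invariant:
  assumes left: "\<And>w. P w = (\<Sum>b\<in>UNIV. P (b # w))"
  shows "invariant_prob weight_measure"
proof -
  let ?\<nu> = weight_measure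
  have sp: "space ?\<nu> = UNIV" using sets_eq_imp_space_eq[OF sets_weight_measure] by simp
  have sm: "shift \<in> measurable ?\<nu> SM"
    using shift_meas by (simp add: measurable_cong_sets[OF sets_weight_measure refl])
  have "distr ?\<nu> SM shift = ?\<nu>"
  proof (rule measure_eq_cyl)
    have "prob_space (distr ?\<nu> SM shift)"
      by (rule prob_space.prob_space_distr[OF weight_measure_prob sm])
    then show "finite_measure (distr ?\<nu> SM shift)" unfolding prob_space_def by simp
  next
    fix w :: "'a list"
    have "emeasure (distr ?\<nu> SM shift) (cyl w) = emeasure ?\<nu> (shift -` cyl w)"
      using emeasure_distr[OF sm cyl_sets] sp by simp
    also have "\<dots> = (\<Sum>b\<in>UNIV. ennreal (P (b # w)))"
      by (simp add: emeasure_shift_vimage emeasure_weight_measure_cyl)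
    also have "\<dots> = emeasure ?\<nu> (cyl w)"
      using sum_ennreal[of UNIV "\<lambda>b. P (b # w)"] P_nonneg
      by (simp add: emeasure_weight_measure_cyl left[of w])
    finally show "emeasure (distr ?\<nu> SM shift) (cyl w) = emeasure ?\<nu> (cyl w)" .
  qed simp_all
  then show ?thesis unfolding invariant_prob_def using weight_measure_prob by simp
qed

lemma limit_frequency_weights:
  fixes s :: "nat \<Rightarrow> 'a::finite seq"
  assumes r: "strict_mono r" and lim: "\<And>w. (\<lambda>i. visit_freq s (r i) w) \<longlonglongrightarrow> Pw w"
  shows "cylinder_weights Pw"
proof
  show "0 \<le> Pw w" for w
  proof (rule LIMSEQ_le_const[OF lim])
    show "\<exists>N. \<forall>n\<ge>N. 0 \<le> visit_freq s (r n) w" using visit_freq_bounds(1) by blast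
  qed
  show "Pw [] = 1"
  proof -
    have "(\<lambda>i. visit_freq s (r (i + 1)) []) \<longlonglongrightarrow> Pw []"
      by (rule LIMSEQ_ignore_initial_segment[OF lim])
    moreover have "visit_freq s (r (i + 1)) [] = 1" for i
    proof -
      have "i + 1 \<le> r (i + 1)" by (rule seq_suble[OF r(1)])
      then have "real (r (i + 1)) \<noteq> 0" by simp
      then show ?thesis by (simp add: visit_freq_def visits_Nil)
    qed
    ultimately have "(\<lambda>i. 1::real) \<longlonglongrightarrow> Pw []" by simp
    then show ?thesis using LIMSEQ_unique[OF _ tendsto_const] by metis
  qed
  show "Pw w = (\<Sum>b\<in>UNIV. Pw (w @ [b]))" for w
  proof -
    have "(\<lambda>i. \<Sum>b\<in>UNIV. visit_freq s (r i) (w @ [b])) \<longlonglongrightarrow> (\<Sum>b\<in>UNIV. Pw (w @ [b]))"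
      by (intro tendsto_sum lim)
    moreover have "(\<lambda>i. \<Sum>b\<in>UNIV. visit_freq s (r i) (w @ [b])) = (\<lambda>i. visit_freq s (r i) w)"
      by (simp only: visit_freq_snoc[symmetric])
    ultimately have "(\<lambda>i. visit_freq s (r i) w) \<longlonglongrightarrow> (\<Sum>b\<in>UNIV. Pw (w @ [b]))" by simp
    then show ?thesis using LIMSEQ_unique[OF lim] by blast
  qed
qed

lemma limit_frequency_left_consistent:
  fixes s :: "nat \<Rightarrow> 'a::finite seq"
  assumes H: "(\<forall>j. shift (s j) = s (Suc j)) \<or> (\<forall>j. shift (s (Suc j)) = s j)"
    and r: "strict_mono r" and lim: "\<And>w. (\<lambda>i. visit_freq s (r i) w) \<longlonglongrightarrow> Pw w"
  shows "Pw w = (\<Sum>b\<in>UNIV. Pw (b # w))"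
proof -
  define d where "d i = (\<Sum>b\<in>UNIV. visit_freq s (r i) (b # w)) - visit_freq s (r i) w" for i
  have dd: "\<bar>d i\<bar> \<le> 1 / real i" if "i \<ge> 1" for i
  proof -
    have ri: "real i \<le> real (r i)" using seq_suble[OF r(1), of i] by simp
    have rp: "0 < real (r i)" using that ri by simp
    have "d i = ((\<Sum>b\<in>UNIV. visits s (r i) (b # w)) - visits s (r i) w) / real (r i)"
      unfolding d_def visit_freq_def by (simp add: sum_divide_distrib diff_divide_distrib)
    then have "\<bar>d i\<bar> = \<bar>(\<Sum>b\<in>UNIV. visits s (r i) (b # w)) - visits s (r i) w\<bar> / real (r i)"
      using rp by simp
    also have "\<dots> \<le> 1 / real (r i)"
      using visits_Cons_diff[OF H, of "r i" w] rp by (simp add: divide_right_mono)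
    also have "\<dots> \<le> 1 / real i" using ri that by (simp add: frac_le)
    finally show ?thesis .
  qed
  have ev: "eventually (\<lambda>i. norm (d i) \<le> 1 / real i) sequentially"
    unfolding eventually_sequentially using dd by auto
  have d0: "d \<longlonglongrightarrow> 0"
    by (rule Lim_null_comparison[OF ev lim_1_over_n])
  have "d \<longlonglongrightarrow> (\<Sum>b\<in>UNIV. Pw (b # w)) - Pw w"
    unfolding d_def[abs_def] by (intro tendsto_diff tendsto_sum lim)
  then have "(\<Sum>b\<in>UNIV. Pw (b # w)) - Pw w = 0" using LIMSEQ_unique[OF _ d0] by blast
  then show ?thesis by simp
qed

lemma limit_frequency_visited:
  fixes s :: "nat \<Rightarrow> 'a::finite seq"
  assumes lim: "(\<lambda>i. visit_freq s (r i) w) \<longlonglongrightarrow> Pw w" and pos: "Pw w \<noteq> 0"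
  shows "\<exists>j. s j \<in> cyl w"
proof (rule ccontr)
  assume "\<not> (\<exists>j. s j \<in> cyl w)"
  then have "visit_freq s k w = 0" for k by (simp add: visit_freq_def visits_def)
  then have "(\<lambda>i. visit_freq s (r i) w) \<longlonglongrightarrow> 0" by simp
  then have "Pw w = 0" using LIMSEQ_unique[OF lim] by blast
  then show False using pos by simp
qed

lemma orbit_limit_measure:
  fixes s :: "nat \<Rightarrow> 'a::finite seq"
  assumes H: "(\<forall>j. shift (s j) = s (Suc j)) \<or> (\<forall>j. shift (s (Suc j)) = s j)"
  shows "\<exists>\<nu>. invariant_prob \<nu> \<and> (\<forall>w. emeasure \<nu> (cyl w) \<noteq> 0 \<longrightarrow> (\<exists>j. s j \<in> cyl w))"
proof -
  have "\<bar>visit_freq s k w\<bar> \<le> 1" for k w using visit_freq_bounds[of s k w] by simp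
  then obtain r where r: "strict_mono r" "\<And>w. convergent (\<lambda>i. visit_freq s (r i) w)"
    using common_convergent_subseq[of "\<lambda>w k. visit_freq s k w" 1] by blast
  define Pw where "Pw w = lim (\<lambda>i. visit_freq s (r i) w)" for w
  have lim: "(\<lambda>i. visit_freq s (r i) w) \<longlonglongrightarrow> Pw w" for w
    using r(2)[of w] unfolding Pw_def by (simp only: convergent_LIMSEQ_iff)
  interpret W: cylinder_weights Pw by (rule limit_frequency_weights[OF r(1) lim])
  have "invariant_prob W.weight_measure"
    using limit_frequency_left_consistent[OF H r(1) lim] by (rule W.weight_measure_invariant)
  moreover have "\<exists>j. s j \<in> cyl w" if "emeasure W.weight_measure (cyl w) \<noteq> 0" for w
  proof (rule limit_frequency_visited[OF lim])
    show "Pw w \<noteq> 0" using that W.emeasure_weight_measure_cyl[of w] ennreal_0 by metis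
  qed
  ultimately show ?thesis by blast
qed

section \<open>Calibrated sub-actions\<close>

definition pcons :: "'a \<Rightarrow> 'a seq \<Rightarrow> 'a seq" where
  "pcons a x = (\<lambda>n. case n of 0 \<Rightarrow> a | Suc k \<Rightarrow> x k)"

lemma shift_pcons[simp]: "shift (pcons a x) = x"
  by (simp add: shift_def pcons_def)

lemma shift_preimage_finite: "finite {y::'a::finite seq. shift y = x}"
proof -
  have "y = pcons (y 0) (shift y)" for y :: "'a seq"
    by (auto simp: pcons_def shift_def fun_eq_iff split: nat.splits)
  then have "{y::'a seq. shift y = x} \<subseteq> range (\<lambda>a. pcons a x)" by blast
  then show ?thesis by (rule finite_subset) simp
qed

lemma integrable_bounded_SM:
  fixes \<nu> :: "'a seq measure" and f :: "'a seq \<Rightarrow> real"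
  assumes "prob_space \<nu>" "sets \<nu> = sets SM" "f \<in> borel_measurable SM" "\<And>u. \<bar>f u\<bar> \<le> B"
  shows "integrable \<nu> f"
proof -
  interpret prob_space \<nu> by fact
  have "f \<in> borel_measurable \<nu>" using assms(3) by (simp add: measurable_cong_sets[OF assms(2) refl])
  then show ?thesis using assms(4) by (intro integrable_const_bound[where B=B]) auto
qed

locale calibrated_subaction =
  fixes lam \<alpha> :: real and A F :: "'a::finite seq \<Rightarrow> real"
  assumes lam0: "0 < lam" and lam1: "lam < 1" and alpha: "0 < \<alpha>"
    and hA: "holder lam \<alpha> A" and hF: "holder lam \<alpha> F"
    and cal: "\<And>x. F x = Max {F y + A y - mA A | y. shift y = x}"
begin

abbreviation "m \<equiv> mA A"
abbreviation "R \<equiv> RF A F"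
abbreviation "\<theta> \<equiv> lam powr \<alpha>"

lemma theta_pos: "0 < \<theta>" using lam0 by simp
lemma theta_lt1: "\<theta> < 1" using powr_less_mono2[of \<alpha> lam 1] lam0 lam1 alpha by simp

lemma R_eq: "R y = F (shift y) - F y - A y + m" by (simp add: RF_def)

lemma calibration_set:
  shows "finite {F y + A y - m | y. shift y = x}" and "{F y + A y - m | y. shift y = x} \<noteq> {}"
proof -
  have "{F y + A y - m | y. shift y = x} = (\<lambda>y. F y + A y - m) ` {y. shift y = x}" by auto
  then show "finite {F y + A y - m | y. shift y = x}" using shift_preimage_finite[of x] by simp
  have "F (pcons undefined x) + A (pcons undefined x) - m \<in> {F y + A y - m | y. shift y = x}"
    by (intro CollectI exI[of _ "pcons undefined x"]) simp
  then show "{F y + A y - m | y. shift y = x} \<noteq> {}" by blast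
qed

lemma R_nonneg: "0 \<le> R y"
proof -
  have "F y + A y - m \<in> {F y' + A y' - m | y'. shift y' = shift y}" by blast
  then have "F y + A y - m \<le> Max {F y' + A y' - m | y'. shift y' = shift y}"
    using calibration_set(1) by (rule Max_ge[rotated])
  then show ?thesis using cal[of "shift y"] by (simp add: R_eq)
qed

lemma calibrating_preimage: "\<exists>y. shift y = x \<and> R y = 0"
proof -
  have "Max {F y + A y - m | y. shift y = x} \<in> {F y + A y - m | y. shift y = x}"
    using calibration_set by (rule Max_in)
  then obtain y where "shift y = x" "Max {F y + A y - m | y. shift y = x} = F y + A y - m" by auto
  then show ?thesis using cal[of x] by (auto simp: R_eq)
qed

lemma F_cylinder_bound: "\<exists>C\<ge>0. \<forall>N u v. (\<forall>i<N. u i = v i) \<longrightarrow> \<bar>F u - F v\<bar> \<le> C * \<theta> ^ N"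
  using holder_agree[OF hF lam0 _ alpha] lam1 by simp

text \<open>The defect is Hoelder as well; its value depends on one more coordinate.\<close>

lemma R_cylinder_bound: "\<exists>C\<ge>0. \<forall>N u v. (\<forall>i<Suc N. u i = v i) \<longrightarrow> \<bar>R u - R v\<bar> \<le> C * \<theta> ^ N"
proof -
  obtain CA where CA: "CA \<ge> 0" "\<And>N u v. (\<forall>i<N. u i = v i) \<Longrightarrow> \<bar>A u - A v\<bar> \<le> CA * \<theta> ^ N"
    using holder_agree[OF hA lam0 _ alpha] lam1 by auto
  obtain CF where CF: "CF \<ge> 0" "\<And>N u v. (\<forall>i<N. u i = v i) \<Longrightarrow> \<bar>F u - F v\<bar> \<le> CF * \<theta> ^ N"
    using F_cylinder_bound by blast
  have "\<bar>R u - R v\<bar> \<le> (2 * CF + CA) * \<theta> ^ N" if a: "\<forall>i<Suc N. u i = v i" for N u v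
  proof -
    have aN: "\<forall>i<N. u i = v i" using a by simp
    have aS: "\<forall>i<N. shift u i = shift v i" using a by (simp add: shift_def)
    have "R u - R v = (F (shift u) - F (shift v)) - (F u - F v) - (A u - A v)" by (simp add: R_eq)
    then have "\<bar>R u - R v\<bar> \<le> \<bar>F (shift u) - F (shift v)\<bar> + \<bar>F u - F v\<bar> + \<bar>A u - A v\<bar>" by linarith
    also have "\<dots> \<le> (2 * CF + CA) * \<theta> ^ N"
      using CF(2)[OF aS] CF(2)[OF aN] CA(2)[OF aN] by (simp add: algebra_simps)
    finally show ?thesis .
  qed
  moreover have "2 * CF + CA \<ge> 0" using CA CF by simp
  ultimately show ?thesis by blast
qed

lemma bounded_A: "\<exists>B. \<forall>u. \<bar>A u\<bar> \<le> B" using holder_bounded[OF hA lam0 _ alpha] lam1 by simp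
lemma bounded_F: "\<exists>B. \<forall>u. \<bar>F u\<bar> \<le> B" using holder_bounded[OF hF lam0 _ alpha] lam1 by simp

lemma bounded_R: "\<exists>B. \<forall>u. \<bar>R u\<bar> \<le> B"
proof -
  obtain BA where BA: "\<And>u. \<bar>A u\<bar> \<le> BA" using bounded_A by blast
  obtain BF where BF: "\<And>u. \<bar>F u\<bar> \<le> BF" using bounded_F by blast
  have "\<bar>R u\<bar> \<le> BF + BF + BA + \<bar>m\<bar>" for u
    using BA[of u] BF[of u] BF[of "shift u"] by (simp add: R_eq)
  then show ?thesis by blast
qed

lemma meas_A: "A \<in> borel_measurable SM" by (rule holder_meas[OF hA lam0 lam1 alpha])
lemma meas_F: "F \<in> borel_measurable SM" by (rule holder_meas[OF hF lam0 lam1 alpha])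
lemma meas_FT: "(\<lambda>x. F (shift x)) \<in> borel_measurable SM"
  using measurable_comp[OF shift_meas meas_F] by (simp add: o_def)
lemma meas_R: "R \<in> borel_measurable SM"
proof -
  have "(\<lambda>y. F (shift y) - F y - A y + m) \<in> borel_measurable SM"
    using meas_FT meas_F meas_A by measurable
  then show ?thesis by (simp add: R_eq[abs_def] RF_def[abs_def])
qed

lemma birkhoff_telescope:
  "(\<Sum>i<n. A ((shift ^^ i) z) - m) = F ((shift ^^ n) z) - F z - (\<Sum>i<n. R ((shift ^^ i) z))"
proof -
  have "(\<Sum>i<n. A ((shift ^^ i) z) - m)
      = (\<Sum>i<n. (F ((shift ^^ Suc i) z) - F ((shift ^^ i) z)) - R ((shift ^^ i) z))"
    by (intro sum.cong refl) (simp add: R_eq)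
  also have "\<dots> = (\<Sum>i<n. F ((shift ^^ Suc i) z) - F ((shift ^^ i) z)) - (\<Sum>i<n. R ((shift ^^ i) z))"
    by (simp add: sum_subtractf)
  also have "(\<Sum>i<n. F ((shift ^^ Suc i) z) - F ((shift ^^ i) z)) = F ((shift ^^ n) z) - F z"
    using sum_lessThan_telescope[of "\<lambda>i. F ((shift ^^ i) z)" n] by simp
  finally show ?thesis .
qed

text \<open>Integrating R against an invariant measure: the coboundary integrates to 0, hence an
  invariant measure is maximizing exactly when it gives R integral 0.\<close>

lemma integral_A:
  assumes "invariant_prob \<nu>"
  shows "integral\<^sup>L \<nu> A = m - integral\<^sup>L \<nu> R"
proof -
  have p: "prob_space \<nu>" and s: "sets \<nu> = sets SM" and d: "distr \<nu> SM shift = \<nu>"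
    using assms unfolding invariant_prob_def by auto
  interpret prob_space \<nu> by (rule p)
  obtain BA where BA: "\<And>u. \<bar>A u\<bar> \<le> BA" using bounded_A by blast
  obtain BF where BF: "\<And>u. \<bar>F u\<bar> \<le> BF" using bounded_F by blast
  have iF: "integrable \<nu> F" by (rule integrable_bounded_SM[OF p s meas_F BF])
  have iFT: "integrable \<nu> (\<lambda>x. F (shift x))" by (rule integrable_bounded_SM[OF p s meas_FT BF])
  have iA: "integrable \<nu> A" by (rule integrable_bounded_SM[OF p s meas_A BA])
  have sm: "shift \<in> measurable \<nu> SM" using shift_meas by (simp add: measurable_cong_sets[OF s refl])
  have "integral\<^sup>L \<nu> (\<lambda>x. F (shift x)) = integral\<^sup>L (distr \<nu> SM shift) F"
    by (rule integral_distr[OF sm meas_F, symmetric])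
  then have eqF: "integral\<^sup>L \<nu> (\<lambda>x. F (shift x)) = integral\<^sup>L \<nu> F" using d by simp
  have "R = (\<lambda>y. F (shift y) - F y - A y + m)" by (simp add: fun_eq_iff R_eq)
  then have "integral\<^sup>L \<nu> R = integral\<^sup>L \<nu> (\<lambda>y. F (shift y)) - integral\<^sup>L \<nu> F - integral\<^sup>L \<nu> A + m"
    using iF iFT iA by (simp add: prob_space)
  then show ?thesis using eqF by simp
qed

lemma maximizing_iff_integral_R:
  assumes "invariant_prob \<nu>"
  shows "\<nu> \<in> maximizing A \<longleftrightarrow> integral\<^sup>L \<nu> R = 0"
  using integral_A[OF assms] assms unfolding maximizing_def by auto

end

section \<open>Invariant measures and functions vanishing along orbits\<close>

text \<open>If f vanishes at the points of a sequence that visits every cylinder of positive measure,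
  then f is small almost everywhere, hence so is its integral.\<close>

lemma integral_le_if_visited:
  fixes \<nu> :: "'a::finite seq measure" and f :: "'a seq \<Rightarrow> real"
  assumes p: "prob_space \<nu>" and sv: "sets \<nu> = sets SM" and iR: "integrable \<nu> f"
    and hold: "\<And>u v. (\<forall>i<N. u i = v i) \<Longrightarrow> \<bar>f u - f v\<bar> \<le> c"
    and vis: "\<And>w. emeasure \<nu> (cyl w) \<noteq> 0 \<Longrightarrow> \<exists>j. s j \<in> cyl w"
    and zero: "\<And>j. f (s j) = 0"
  shows "integral\<^sup>L \<nu> f \<le> c"
proof -
  define W where "W = {w::'a list. length w = N \<and> emeasure \<nu> (cyl w) = 0}"
  have "W \<subseteq> {xs. set xs \<subseteq> UNIV \<and> length xs = N}" unfolding W_def by auto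
  then have fW: "finite W" by (rule finite_subset) (rule finite_lists_length_eq, simp)
  have nW: "(\<Union>w\<in>W. cyl w) \<in> null_sets \<nu>"
  proof (rule null_sets_UN')
    show "countable W" using fW by (rule countable_finite)
  next
    fix w assume "w \<in> W"
    then show "cyl w \<in> null_sets \<nu>" unfolding W_def using sv by (intro null_setsI) auto
  qed
  have "{x \<in> space \<nu>. \<not> f x \<le> c} \<subseteq> (\<Union>w\<in>W. cyl w)"
  proof
    fix x assume x: "x \<in> {x \<in> space \<nu>. \<not> f x \<le> c}"
    have "emeasure \<nu> (cyl (pref N x)) = 0"
    proof (rule ccontr)
      assume "emeasure \<nu> (cyl (pref N x)) \<noteq> 0"
      then obtain j where "s j \<in> cyl (pref N x)" using vis by blast
      then have "\<bar>f (s j) - f x\<bar> \<le> c" by (intro hold) (simp add: in_cyl_pref)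
      then show False using zero[of j] x by auto
    qed
    then have "pref N x \<in> W" unfolding W_def by simp
    then show "x \<in> (\<Union>w\<in>W. cyl w)" by (rule UN_I) (simp add: in_cyl_pref)
  qed
  then have ae: "AE x in \<nu>. f x \<le> c" by (rule AE_I'[OF nW])
  interpret prob_space \<nu> by (rule p)
  have "integral\<^sup>L \<nu> f \<le> integral\<^sup>L \<nu> (\<lambda>x. c)"
    by (rule integral_mono_AE[OF iR _ ae]) simp
  then show ?thesis by (simp add: prob_space)
qed

lemma zero_on_msupp:
  fixes \<mu> :: "'a::finite seq measure" and f :: "'a seq \<Rightarrow> real"
  assumes p: "prob_space \<mu>" and s: "sets \<mu> = sets SM" and l: "0 < lam" "lam < 1"
    and nonneg: "\<And>z. 0 \<le> f z" and intf: "integrable \<mu> f" and int0: "integral\<^sup>L \<mu> f = 0"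
    and cont: "\<And>\<epsilon>. 0 < \<epsilon> \<Longrightarrow> \<exists>N. \<forall>z. (\<forall>i<N. z i = y i) \<longrightarrow> \<bar>f z - f y\<bar> < \<epsilon>"
    and y: "y \<in> msupp lam \<mu>"
  shows "f y = 0"
proof (rule ccontr)
  assume "f y \<noteq> 0"
  then have fy: "f y > 0" using nonneg[of y] by simp
  obtain N where N: "\<And>z. (\<forall>i<N. z i = y i) \<Longrightarrow> \<bar>f z - f y\<bar> < f y / 2"
    using cont[of "f y / 2"] fy by auto
  interpret prob_space \<mu> by (rule p)
  define c where "c = cyl (pref N y)"
  have cs: "c \<in> sets \<mu>" unfolding c_def s by (rule cyl_sets)
  have "emeasure \<mu> c \<noteq> 0" unfolding c_def by (rule msupp_cyl[OF y s l])
  then have mc: "measure \<mu> c > 0"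
    by (metis emeasure_eq_measure ennreal_0 measure_nonneg order_le_less)
  have bnd: "f y / 2 * indicator c z \<le> f z" for z
  proof (cases "z \<in> c")
    case True
    then have "\<bar>f z - f y\<bar> < f y / 2" unfolding c_def by (intro N) (simp add: in_cyl_pref)
    then have "f y / 2 \<le> f z" by linarith
    then show ?thesis using True by simp
  qed (use nonneg in simp)
  have "f y / 2 * measure \<mu> c = integral\<^sup>L \<mu> (\<lambda>z. f y / 2 * indicator c z)"
    using cs by simp
  also have "\<dots> \<le> integral\<^sup>L \<mu> f"
  proof (rule integral_mono[OF _ intf bnd])
    have "emeasure \<mu> c < \<infinity>" by (simp add: emeasure_eq_measure)
    then show "integrable \<mu> (\<lambda>z. f y / 2 * indicator c z)"
      using cs by (intro integrable_mult_right integrable_real_indicator)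
  qed
  finally have "f y / 2 * measure \<mu> c \<le> 0" using int0 by simp
  moreover have "0 < f y / 2 * measure \<mu> c" using fy mc by simp
  ultimately show False by linarith
qed

context calibrated_subaction
begin

lemma orbit_limit_maximizing:
  fixes s :: "nat \<Rightarrow> 'a seq"
  assumes H: "(\<forall>j. shift (s j) = s (Suc j)) \<or> (\<forall>j. shift (s (Suc j)) = s j)"
    and Z: "\<And>j. R (s j) = 0"
  shows "\<exists>\<nu>. \<nu> \<in> maximizing A \<and> (\<forall>w. emeasure \<nu> (cyl w) \<noteq> 0 \<longrightarrow> (\<exists>j. s j \<in> cyl w))"
proof -
  obtain \<nu> where inv: "invariant_prob \<nu>" and vis: "\<And>w. emeasure \<nu> (cyl w) \<noteq> 0 \<Longrightarrow> \<exists>j. s j \<in> cyl w"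
    using orbit_limit_measure[OF H] by blast
  have p: "prob_space \<nu>" and sv: "sets \<nu> = sets SM" using inv unfolding invariant_prob_def by auto
  obtain BR where BR: "\<And>u. \<bar>R u\<bar> \<le> BR" using bounded_R by blast
  have iR: "integrable \<nu> R" by (rule integrable_bounded_SM[OF p sv meas_R BR])
  obtain CR where CR: "CR \<ge> 0" "\<And>N u v. (\<forall>i<Suc N. u i = v i) \<Longrightarrow> \<bar>R u - R v\<bar> \<le> CR * \<theta> ^ N"
    using R_cylinder_bound by blast
  have "integral\<^sup>L \<nu> R \<le> CR * \<theta> ^ N" for N
    by (rule integral_le_if_visited[OF p sv iR CR(2) vis Z])
  moreover have "(\<lambda>N. CR * \<theta> ^ N) \<longlonglongrightarrow> 0"
    by (rule tendsto_mult_right_zero, rule LIMSEQ_power_zero) (use theta_pos theta_lt1 in simp)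
  ultimately have "integral\<^sup>L \<nu> R \<le> 0"
    by (intro LIMSEQ_le_const[of "\<lambda>N. CR * \<theta> ^ N"]) auto
  moreover have "0 \<le> integral\<^sup>L \<nu> R" by (rule integral_nonneg_AE, rule AE_I2, rule R_nonneg)
  ultimately have "\<nu> \<in> maximizing A" using maximizing_iff_integral_R[OF inv] by simp
  then show ?thesis using vis by blast
qed

lemma R_cylinder_continuous:
  assumes "0 < \<epsilon>"
  shows "\<exists>N. \<forall>z. (\<forall>i<N. z i = y i) \<longrightarrow> \<bar>R z - R y\<bar> < \<epsilon>"
proof -
  obtain CR where CR: "CR \<ge> 0" "\<And>N u v. (\<forall>i<Suc N. u i = v i) \<Longrightarrow> \<bar>R u - R v\<bar> \<le> CR * \<theta> ^ N"
    using R_cylinder_bound by blast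
  obtain N where N: "\<theta> ^ N < \<epsilon> / (CR + 1)"
    using real_arch_pow_inv[of "\<epsilon> / (CR + 1)" \<theta>] assms CR(1) theta_lt1 by auto
  have "CR * \<theta> ^ N \<le> (CR + 1) * \<theta> ^ N" using theta_pos by simp
  also have "\<dots> < \<epsilon>" using N CR(1) by (simp add: field_simps)
  finally show ?thesis using CR(2) by (intro exI[of _ "Suc N"]) (meson le_less_trans)
qed

lemma R_vanishes_on_msupp:
  assumes mu: "\<mu> \<in> maximizing A" and y: "y \<in> msupp lam \<mu>"
  shows "R y = 0"
proof -
  have inv: "invariant_prob \<mu>" using mu unfolding maximizing_def by auto
  have p: "prob_space \<mu>" and s: "sets \<mu> = sets SM" using inv unfolding invariant_prob_def by auto
  obtain BR where BR: "\<And>u. \<bar>R u\<bar> \<le> BR" using bounded_R by blast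
  show ?thesis
  proof (rule zero_on_msupp[OF p s lam0 lam1 R_nonneg _ _ R_cylinder_continuous y])
    show "integrable \<mu> R" by (rule integrable_bounded_SM[OF p s meas_R BR])
    show "integral\<^sup>L \<mu> R = 0" using mu maximizing_iff_integral_R[OF inv] by simp
  qed
qed

end

section \<open>Closing orbits on which the defect vanishes\<close>

lemma sum_lessThan_add:
  fixes f :: "nat \<Rightarrow> real"
  shows "(\<Sum>i<n + k. f i) = (\<Sum>i<n. f i) + (\<Sum>i<k. f (n + i))"
  by (induction k) (simp_all add: add.assoc)

lemma geom_bound:
  fixes t :: real assumes "0 < t" "t < 1"
  shows "(\<Sum>i<n. t ^ (n - Suc i)) \<le> 1 / (1 - t)"
proof -
  have "(\<Sum>i<n. t ^ (n - Suc i)) = (\<Sum>i<n. t ^ i)" by (rule sum.nat_diff_reindex)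
  also have "\<dots> = (1 - t ^ n) / (1 - t)" using assms by (simp add: sum_gp_strict)
  also have "\<dots> \<le> 1 / (1 - t)" using assms by (simp add: divide_right_mono)
  finally show ?thesis .
qed

context calibrated_subaction
begin

lemma calibrated_backward_orbit:
  "\<exists>xb. xb 0 = x \<and> (\<forall>j. shift (xb (Suc j)) = xb j) \<and> (\<forall>j. R (xb (Suc j)) = 0)"
proof -
  obtain g where g: "\<And>z. shift (g z) = z \<and> R (g z) = 0"
    using calibrating_preimage by metis
  show ?thesis using g by (intro exI[of _ "\<lambda>j. (g ^^ j) x"]) simp
qed

lemma backward_orbit_shift:
  assumes "\<And>j. shift (xb (Suc j)) = xb j" "i \<le> j"
  shows "(shift ^^ i) (xb j) = xb (j - i)"
  using assms(2)
proof (induction i)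
  case (Suc i)
  then have "j - i = Suc (j - Suc i)" by simp
  then show ?case using Suc assms(1) by simp
qed simp

lemma shadowing_defect:
  assumes CR: "CR \<ge> 0" "\<And>N u v. (\<forall>i<Suc N. u i = v i) \<Longrightarrow> \<bar>R u - R v\<bar> \<le> CR * \<theta> ^ N"
    and Z: "\<And>i. i < n \<Longrightarrow> R ((shift ^^ i) x) = 0"
    and agr: "\<forall>i < n + N. z i = x i"
  shows "(\<Sum>i<n. R ((shift ^^ i) z)) \<le> CR / (1 - \<theta>) * \<theta> ^ N"
proof -
  have "R ((shift ^^ i) z) \<le> CR * \<theta> ^ N * \<theta> ^ (n - Suc i)" if i: "i < n" for i
  proof -
    have "\<forall>t<Suc (N + (n - Suc i)). ((shift ^^ i) z) t = ((shift ^^ i) x) t"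
      using agr i by (simp add: funpow_shift)
    then have "\<bar>R ((shift ^^ i) z) - R ((shift ^^ i) x)\<bar> \<le> CR * \<theta> ^ (N + (n - Suc i))"
      by (rule CR(2))
    then show ?thesis using Z[OF i] by (simp add: power_add mult.assoc)
  qed
  then have "(\<Sum>i<n. R ((shift ^^ i) z)) \<le> (\<Sum>i<n. CR * \<theta> ^ N * \<theta> ^ (n - Suc i))"
    by (intro sum_mono) simp
  also have "\<dots> = CR * \<theta> ^ N * (\<Sum>i<n. \<theta> ^ (n - Suc i))" by (simp add: sum_distrib_left)
  also have "\<dots> \<le> CR * \<theta> ^ N * (1 / (1 - \<theta>))"
    using geom_bound[OF theta_pos theta_lt1, of n] CR(1) theta_pos by (intro mult_left_mono) simp_all
  finally show ?thesis by simp
qed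

lemma glued_orbit:
  assumes CF: "\<And>N u v. (\<forall>i<N. u i = v i) \<Longrightarrow> \<bar>F u - F v\<bar> \<le> CF * \<theta> ^ N"
    and CR: "CR \<ge> 0" "\<And>N u v. (\<forall>i<Suc N. u i = v i) \<Longrightarrow> \<bar>R u - R v\<bar> \<le> CR * \<theta> ^ N"
    and Z: "\<And>i. R ((shift ^^ i) x) = 0"
    and xb: "xb 0 = x" "\<And>j. shift (xb (Suc j)) = xb j" "\<And>j. R (xb (Suc j)) = 0"
    and close: "\<forall>i<N. (shift ^^ n) x i = xb j' i" and j': "j' \<ge> 1"
  defines "z \<equiv> \<lambda>i. if i < n then x i else xb j' (i - n)"
  shows "(shift ^^ (n + j')) z = x" and "\<forall>i < n + N. z i = x i"
    and "(\<Sum>i<n + j'. A ((shift ^^ i) z) - m) \<ge> - (CF + CR / (1 - \<theta>)) * \<theta> ^ N"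
proof -
  show agr: "\<forall>i < n + N. z i = x i"
    using close by (auto simp: z_def funpow_shift) (metis add_diff_inverse_nat add.commute
        less_diff_conv2 not_less)
  have "(shift ^^ (j' + n)) z = (shift ^^ j') (xb j')" by (simp add: funpow_add funpow_shift z_def)
  then show TL: "(shift ^^ (n + j')) z = x" using backward_orbit_shift[of xb j' j', OF xb(2)] xb(1)
    by (simp add: add.commute)
  have backward_part: "(\<Sum>i<j'. R ((shift ^^ (n + i)) z)) = 0"
  proof (rule sum.neutral, rule ballI)
    fix i assume "i \<in> {..<j'}"
    then have "(shift ^^ (n + i)) z = xb (Suc (j' - Suc i))"
      using backward_orbit_shift[of xb i j', OF xb(2)] Suc_diff_Suc
      by (simp add: funpow_shift z_def add.assoc[symmetric])
    then show "R ((shift ^^ (n + i)) z) = 0" using xb(3) by simp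
  qed
  have "(\<Sum>i<n + j'. A ((shift ^^ i) z) - m) = F x - F z - (\<Sum>i<n. R ((shift ^^ i) z))"
    using birkhoff_telescope[of z "n + j'"] TL backward_part
    by (simp add: sum_lessThan_add)
  moreover have "\<bar>F z - F x\<bar> \<le> CF * \<theta> ^ N" using agr by (intro CF) simp
  moreover have "(\<Sum>i<n. R ((shift ^^ i) z)) \<le> CR / (1 - \<theta>) * \<theta> ^ N"
    using shadowing_defect[OF CR Z agr] .
  ultimately show "(\<Sum>i<n + j'. A ((shift ^^ i) z) - m) \<ge> - (CF + CR / (1 - \<theta>)) * \<theta> ^ N"
    by (simp add: algebra_simps)
qed

end

lemma Lim_at_right_squeeze_powr:
  fixes G :: "real \<Rightarrow> ereal"
  assumes alpha: "0 < \<alpha>"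
    and lo: "\<And>\<epsilon>. 0 < \<epsilon> \<Longrightarrow> ereal (- B * \<epsilon> powr \<alpha>) \<le> G \<epsilon>"
    and up: "\<And>\<epsilon>. 0 < \<epsilon> \<Longrightarrow> G \<epsilon> \<le> ereal (C * \<epsilon> powr \<alpha>)"
  shows "Lim (at_right 0) G = 0"
proof -
  have h0: "((\<lambda>\<epsilon>. \<epsilon> powr \<alpha>) \<longlongrightarrow> 0) (at_right (0::real))"
    by (rule tendsto_zero_powrI[OF tendsto_ident_at tendsto_const _ alpha])
      (simp add: eventually_at_filter)
  have lu: "((\<lambda>\<epsilon>. ereal (C * \<epsilon> powr \<alpha>)) \<longlongrightarrow> ereal 0) (at_right 0)"
    and ll: "((\<lambda>\<epsilon>. ereal (- B * \<epsilon> powr \<alpha>)) \<longlongrightarrow> ereal 0) (at_right 0)"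
    by (intro tendsto_ereal tendsto_mult_right_zero h0)+
  have ev: "eventually (\<lambda>\<epsilon>::real. 0 < \<epsilon>) (at_right 0)" by (simp add: eventually_at_filter)
  have "(G \<longlongrightarrow> ereal 0) (at_right 0)"
    by (rule tendsto_sandwich[OF eventually_mono[OF ev lo] eventually_mono[OF ev up] ll lu])
  then show ?thesis by (simp add: tendsto_Lim zero_ereal_def)
qed

context calibrated_subaction
begin

lemma returning_points:
  assumes mu: "maximizing A = {\<mu>}" and Z: "\<And>i. R ((shift ^^ i) x) = 0"
  shows "\<exists>B\<ge>0. \<forall>N. \<exists>k z. k \<ge> 1 \<and> (shift ^^ k) z = x \<and> (\<forall>i<N. z i = x i)
            \<and> (\<Sum>i<k. A ((shift ^^ i) z) - m) \<ge> - B * \<theta> ^ N"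
proof -
  obtain xb where xb: "xb 0 = x" "\<And>j. shift (xb (Suc j)) = xb j" "\<And>j. R (xb (Suc j)) = 0"
    using calibrated_backward_orbit by blast
  have "(\<forall>j. shift ((shift ^^ j) x) = (shift ^^ Suc j) x) \<or> (\<forall>j. shift ((shift ^^ Suc j) x) = (shift ^^ j) x)"
    by simp
  from orbit_limit_maximizing[OF this Z]
  have visf: "\<And>w. emeasure \<mu> (cyl w) \<noteq> 0 \<Longrightarrow> \<exists>j. (shift ^^ j) x \<in> cyl w" using mu by force
  have "(\<forall>j. shift (xb (Suc j)) = xb (Suc (Suc j))) \<or> (\<forall>j. shift (xb (Suc (Suc j))) = xb (Suc j))"
    using xb(2) by blast
  from orbit_limit_maximizing[OF this xb(3)]
  have visb: "\<And>w. emeasure \<mu> (cyl w) \<noteq> 0 \<Longrightarrow> \<exists>j. xb (Suc j) \<in> cyl w" using mu by force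
  have "invariant_prob \<mu>" using mu unfolding maximizing_def by auto
  then obtain y where y: "\<And>N. emeasure \<mu> (cyl (pref N y)) \<noteq> 0"
    using exists_heavy_point unfolding invariant_prob_def by blast
  obtain CF where CF: "CF \<ge> 0" "\<And>N u v. (\<forall>i<N. u i = v i) \<Longrightarrow> \<bar>F u - F v\<bar> \<le> CF * \<theta> ^ N"
    using F_cylinder_bound by blast
  obtain CR where CR: "CR \<ge> 0" "\<And>N u v. (\<forall>i<Suc N. u i = v i) \<Longrightarrow> \<bar>R u - R v\<bar> \<le> CR * \<theta> ^ N"
    using R_cylinder_bound by blast
  have "\<exists>k z. k \<ge> 1 \<and> (shift ^^ k) z = x \<and> (\<forall>i<N. z i = x i)
          \<and> (\<Sum>i<k. A ((shift ^^ i) z) - m) \<ge> - (CF + CR / (1 - \<theta>)) * \<theta> ^ N" for N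
  proof -
    obtain n where n: "(shift ^^ n) x \<in> cyl (pref N y)" using visf y by blast
    obtain j where j: "xb (Suc j) \<in> cyl (pref N y)" using visb y by blast
    have close: "\<forall>i<N. (shift ^^ n) x i = xb (Suc j) i" using n j by (simp add: in_cyl_pref)
    define z where "z = (\<lambda>i. if i < n then x i else xb (Suc j) (i - n))"
    have "(shift ^^ (n + Suc j)) z = x" "\<forall>i < n + N. z i = x i"
      "(\<Sum>i<n + Suc j. A ((shift ^^ i) z) - m) \<ge> - (CF + CR / (1 - \<theta>)) * \<theta> ^ N"
      using glued_orbit[OF CF(2) CR Z xb close] unfolding z_def by simp_all
    then show ?thesis by (intro exI[of _ "n + Suc j"] exI[of _ z]) auto
  qed
  moreover have "CF + CR / (1 - \<theta>) \<ge> 0" using CF CR theta_lt1 by simp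
  ultimately show ?thesis by blast
qed

text \<open>Birkhoff sums of a potential are bounded above by the oscillation of a sub-action.\<close>

lemma birkhoff_sum_le_holder:
  "\<exists>C\<ge>0. \<forall>n z. (\<Sum>i<n. A ((shift ^^ i) z) - m) \<le> C * sdist lam z ((shift ^^ n) z) powr \<alpha>"
proof -
  obtain C0 where C0: "\<And>u v. \<bar>F u - F v\<bar> \<le> C0 * sdist lam u v powr \<alpha>"
    using hF unfolding holder_def by blast
  have "(\<Sum>i<n. A ((shift ^^ i) z) - m) \<le> max C0 0 * sdist lam z ((shift ^^ n) z) powr \<alpha>" for n z
  proof -
    have "(\<Sum>i<n. A ((shift ^^ i) z) - m) \<le> F ((shift ^^ n) z) - F z"
      using birkhoff_telescope[of z n] R_nonneg by (simp add: sum_nonneg)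
    also have "\<dots> \<le> C0 * sdist lam z ((shift ^^ n) z) powr \<alpha>" using C0 by (smt (verit))
    also have "\<dots> \<le> max C0 0 * sdist lam z ((shift ^^ n) z) powr \<alpha>" by (intro mult_right_mono) auto
    finally show ?thesis .
  qed
  then show ?thesis by (intro exI[of _ "max C0 0"]) auto
qed

lemma zero_defect_orbit_in_aubry:
  assumes mu: "maximizing A = {\<mu>}" and Z: "\<And>i. R ((shift ^^ i) x) = 0"
  shows "x \<in> aubry lam A"
proof -
  obtain B where B0: "B \<ge> 0" and ret: "\<And>N. \<exists>k z. k \<ge> 1 \<and> (shift ^^ k) z = x \<and> (\<forall>i<N. z i = x i)
            \<and> (\<Sum>i<k. A ((shift ^^ i) z) - m) \<ge> - B * \<theta> ^ N"
    using returning_points[OF mu Z] by blast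
  obtain C where C: "\<And>n z. (\<Sum>i<n. A ((shift ^^ i) z) - m) \<le> C * sdist lam z ((shift ^^ n) z) powr \<alpha>"
    "C \<ge> 0" using birkhoff_sum_le_holder by blast
  define S where "S \<epsilon> = {ereal (\<Sum>i<n. A ((shift ^^ i) z) - mA A) | n z.
                 n \<ge> 1 \<and> (shift ^^ n) z = x \<and> sdist lam z x < \<epsilon>}" for \<epsilon>
  have "Lim (at_right 0) (\<lambda>\<epsilon>. Sup (S \<epsilon>)) = 0"
  proof (rule Lim_at_right_squeeze_powr[OF alpha])
    fix \<epsilon> :: real assume eps: "0 < \<epsilon>"
    show "Sup (S \<epsilon>) \<le> ereal (C * \<epsilon> powr \<alpha>)"
    proof (rule Sup_least)
      fix e assume "e \<in> S \<epsilon>"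
      then obtain n z where nz: "e = ereal (\<Sum>i<n. A ((shift ^^ i) z) - m)" "(shift ^^ n) z = x"
          "sdist lam z x < \<epsilon>" unfolding S_def by blast
      have "C * sdist lam z x powr \<alpha> \<le> C * \<epsilon> powr \<alpha>"
        using C(2) nz(3) sdist_nonneg[OF lam0, of z x] alpha by (intro mult_left_mono powr_mono2) simp_all
      then show "e \<le> ereal (C * \<epsilon> powr \<alpha>)" using nz C(1)[of z n] by simp
    qed
    obtain N where N: "lam ^ N < \<epsilon>" using real_arch_pow_inv[OF eps lam1] by blast
    obtain k z where kz: "k \<ge> 1" "(shift ^^ k) z = x" "\<forall>i<N. z i = x i"
        "(\<Sum>i<k. A ((shift ^^ i) z) - m) \<ge> - B * \<theta> ^ N"
      using ret by blast
    have "sdist lam z x < \<epsilon>" using sdist_agree[OF lam0 _ kz(3)] lam1 N by simp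
    then have mem: "ereal (\<Sum>i<k. A ((shift ^^ i) z) - m) \<in> S \<epsilon>"
      unfolding S_def using kz(1,2) by blast
    have "\<theta> ^ N = (lam ^ N) powr \<alpha>" using powr_pow_swap[OF lam0] by simp
    also have "\<dots> \<le> \<epsilon> powr \<alpha>" using N lam0 alpha by (intro powr_mono2) simp_all
    finally have "- B * \<epsilon> powr \<alpha> \<le> - B * \<theta> ^ N" using B0 by (simp add: mult_left_mono)
    then have "ereal (- B * \<epsilon> powr \<alpha>) \<le> ereal (\<Sum>i<k. A ((shift ^^ i) z) - m)" using kz(4) by simp
    also have "\<dots> \<le> Sup (S \<epsilon>)" using mem by (rule Sup_upper)
    finally show "ereal (- B * \<epsilon> powr \<alpha>) \<le> Sup (S \<epsilon>)" .
  qed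
  then show ?thesis unfolding aubry_def SA_def S_def by simp
qed

end

context calibrated_subaction
begin

text \<open>Since R is nonnegative, I_F(x) vanishes only if R vanishes along the forward orbit of x.\<close>

lemma R_orbit_zero_if_IF_nonpos:
  assumes "IF A F x \<le> 0"
  shows "R ((shift ^^ i) x) = 0"
proof -
  have nn: "\<And>n. 0 \<le> ereal (R ((shift ^^ n) x))" using R_nonneg by simp
  have "ereal (R ((shift ^^ i) x)) \<le> (\<Sum>n<Suc i. ereal (R ((shift ^^ n) x)))"
    using sum_nonneg[of "{..<i}", OF nn] by (simp add: add_increasing)
  also have "\<dots> \<le> (\<Sum>n. ereal (R ((shift ^^ n) x)))" by (rule suminf_upper[OF nn])
  also have "\<dots> \<le> 0" using assms unfolding IF_def .
  finally show ?thesis using R_nonneg[of "(shift ^^ i) x"] by simp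
qed

text \<open>The support of a maximizing measure is forward invariant and R vanishes on it; so if T x
  lies in the support and R x = 0, then R vanishes along the forward orbit of x.\<close>

lemma R_orbit_zero_if_shift_in_msupp:
  assumes mu: "\<mu> \<in> maximizing A" and sx: "shift x \<in> msupp lam \<mu>" and R0: "R x = 0"
  shows "R ((shift ^^ i) x) = 0"
proof (cases i)
  case (Suc k)
  have inv: "invariant_prob \<mu>" using mu unfolding maximizing_def by simp
  have "(shift ^^ k) (shift x) \<in> msupp lam \<mu>"
    by (induction k) (use sx msupp_shift[OF inv _ lam0 lam1] in auto)
  then show ?thesis using R_vanishes_on_msupp[OF mu] Suc by (simp add: funpow_swap1)
qed (use R0 in simp)

end

theorem mainTheorem17:
  fixes lam \<alpha> :: real and A F :: "'a::finite seq \<Rightarrow> real" and x :: "'a seq"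
  assumes "0 < lam" and "lam < 1" and "0 < \<alpha>"
    and "A \<in> classR lam \<alpha>" and "F \<in> calibrated lam \<alpha> A"
  shows "(x \<notin> aubry lam A \<longrightarrow> IF A F x > 0)
       \<and> (x \<notin> aubry lam A \<and> shift x \<in> aubry lam A \<longrightarrow> RF A F x > 0)"
proof -
  have hA: "holder lam \<alpha> A" and "\<exists>\<mu>. maximizing A = {\<mu>} \<and> aubry lam A = msupp lam \<mu>"
    using assms(4) unfolding classR_def mem_Collect_eq by blast+
  then obtain \<mu> where mu: "maximizing A = {\<mu>}" and au: "aubry lam A = msupp lam \<mu>" by blast
  have hF: "holder lam \<alpha> F" and cal: "\<And>x. F x = Max {F y + A y - mA A | y. shift y = x}"
    using assms(5) unfolding calibrated_def mem_Collect_eq by blast+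
  interpret calibrated_subaction lam \<alpha> A F
    using assms(1-3) hA hF cal by (rule calibrated_subaction.intro)
  have part1: "IF A F x > 0" if "x \<notin> aubry lam A"
  proof (rule ccontr)
    assume "\<not> IF A F x > 0"
    then have "\<And>i. R ((shift ^^ i) x) = 0" by (intro R_orbit_zero_if_IF_nonpos) simp
    then show False using zero_defect_orbit_in_aubry[OF mu] that by blast
  qed
  have part2: "RF A F x > 0" if "x \<notin> aubry lam A" and "shift x \<in> aubry lam A"
  proof (rule ccontr)
    assume "\<not> RF A F x > 0"
    then have "R x = 0" using R_nonneg[of x] by simp
    then have "\<And>i. R ((shift ^^ i) x) = 0"
      using R_orbit_zero_if_shift_in_msupp[of \<mu>] mu au that(2) by simp
    then show False using zero_defect_orbit_in_aubry[OF mu] that(1) by blast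
  qed
  show ?thesis using part1 part2 by blast
qed

end
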